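(* Let $T_1=(Q_1,\Sigma,\Delta,R_1,q_1^0)$ and $T_2=(Q_2,\Delta,\Omega,R_2,q_2^0)$ be top-down tree transducers, let $\hat{T}_1$ be the product construction of $T_1$ and the domain automaton of $T_2$, and let $M$ be the look-ahead transducer constructed from $T_1$ and $T_2$ as described in the context. Then the composition $\hat{T}_1\circ T_2$ (i.e., the relation $\mathcal{R}(\hat{T}_1)\circ\mathcal{R}(T_2)$) is functional if and only if $M$ is functional.
   Context: A top-down tree transducer $T=(Q,\Sigma,\Delta,R,q_0)$ has finite state set $Q$, ranked input/output alphabets $\Sigma,\Delta$, initial state $q_0$, and finite rule set $R$ of rules $q(a(x_1,\dots,x_k))\to t$ with $a\in\Sigma_k$ ($\Sigma_k$ = symbols of rank $k$) and $t$ a tree over $\Delta$ whose leaves may additionally be of the form $q'(x_i)$, $q'\in Q$, $i\in[k]$; rules are used as rewrite rules in the usual way. $\mathcal{R}(T)$ is the set of pairs $(s,t)$ with $t$ a tree over $\Delta$ derivable from $q_0(s)$; $\text{dom}(q)$ is the set of inputs $s$ such that some tree over $\Delta$ is derivable from $q(s)$. A relation is functional if it is a (partial) function; $\mathcal{R}_1\circ\mathcal{R}_2=\{(s,u)\mid\exists t:(s,t)\in\mathcal{R}_1,(t,u)\in\mathcal{R}_2\}$. For $q\in Q$, $a\in\Sigma_k$, $\text{rhs}_T(q,a)$ is the set of right-hand sides of rules with left-hand side $q(a(x_1,\dots,x_k))$; for a right-hand side $\xi$ (resp. a set $\Gamma$ of right-hand sides), $\xi[x_i]$ (resp. $\Gamma[x_i]$)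 is the set of states $q'$ such that $q'(x_i)$ occurs in $\xi$ (resp. in some tree of $\Gamma$). Domain automaton of $T$: the top-down tree automaton (transducer over $\Sigma$ with rules of the form $p(a(x_1,\dots,x_k))\to a(p_1(x_1),\dots,p_k(x_k))$) with states all subsets of $Q$, initial state $\{q_0\}$, rules $S(a(x_1,\dots,x_k))\to a(S_1(x_1),\dots,S_k(x_k))$ for every $a\in\Sigma_k$, nonempty $S=\{q_1,\dots,q_n\}\subseteq Q$ and nonempty $\Gamma_j\subseteq\text{rhs}_T(q_j,a)$ ($j\in[n]$), where $S_i=\bigcup_j\Gamma_j[x_i]$, and rules $\emptyset(a(x_1,\dots,x_k))\to a(\emptyset(x_1),\dots,\emptyset(x_k))$ for all $a$; for an automaton state $l$, $\text{dom}(l)$ is the set of trees accepted from $l$. Product construction of transducers $T=(Q,\Sigma,\Delta,R,q_0)$ and $T'=(Q',\Delta,\Omega,R',q'_0)$: the transducer with states $Q\times Q'$, initial state $(q_0,q'_0)$, and, for every rule $q(a(x_1,\dots,x_k))\to\xi$ of $T$, every $p\in Q'$ and every tree $\zeta$ derivable from $p(\xi)$ using rules of $T'$ in which the leaves of $\xi$ of the form $q''(x_i)$ are treated as unrewritable symbols and a state $p'$ applied to such a leaf stays as $p'(q''(x_i))$, the rule $(q,p)(a(x_1,\dots,x_k))\to\zeta'$ (said to be obtained from the rule $q(a(x_1,\dots,x_k))\to\xi$ by translating $\xi$ with $p$), where $\zeta'$ replaces each $p'(q''(x_i))$ by $(q'',p')(x_i)$. A top-down tree transducer with look-ahead is a tuple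 $(Q,\Sigma,\Delta,R,q_0,B)$ where $B$ is a top-down tree automaton over $\Sigma$ with state set $L$ and rules have the form $q(a(x_1\!:\!l_1,\dots,x_k\!:\!l_k))\to t$ with $l_i\in L$; on input $s$, each node $v$ with label $a\in\Sigma_k$ is first relabeled by $\langle a,l_1,\dots,l_k\rangle$ where $l_i\in L$ are such that the $i$-th subtree of $v$ is in $\text{dom}(l_i)$, and the relabeled tree is then processed reading each rule as $q(\langle a,l_1,\dots,l_k\rangle(x_1,\dots,x_k))\to t$; the relation consists of all pairs $(s,r)$ with $r$ obtainable this way. Construction of $M$: let $\hat{T}_1$ be the product construction of $T_1$ and the domain automaton of $T_2$ (states written $(q,S)$ with $q\in Q_1$, $S\subseteq Q_2$), and $N$ the product construction of $\hat{T}_1$ and $T_2$ (states written $(q,S,q')$). The states of $M$ are the $(q,S,q')$ with $q'\in S$; its initial state is $(q_1^0,\{q_2^0\},q_2^0)$; its look-ahead automaton is the domain automaton $\hat{A}$ of $\hat{T}_1$. For every rule $(q,S,q')(a(x_1,\dots,x_k))\to\gamma$ of $N$ involving only such states, obtained from the rule $(q,S)(a(x_1,\dots,x_k))\to\xi$ of $\hat{T}_1$ by translating $\xi$ with $q'$, and for all states $l_1,\dots,l_k$ of $\hat{A}$ with $\xi[x_i]\subseteq l_i$ ($i\in[k]$), $M$ has the rule $(q,S,q')(a(x_1\!:\!l_1,\dots,x_k\!:\!l_k))\to\gamma$. *)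

theory Defs
  imports Main
begin

type_synonym 'f ralph = "'f set \<times> ('f \<Rightarrow> nat)"

datatype 'f tree = T 'f "'f tree list"

text \<open>Trees whose leaves may additionally be of the form Lf v (used for
  right-hand sides, where v = (q', i) stands for q'(x_i), and for sentential forms).\<close>
datatype ('f, 'v) tr = Nd 'f "('f, 'v) tr list" | Lf 'v

fun wt :: "'f ralph \<Rightarrow> 'f tree \<Rightarrow> bool" where
  "wt A (T a ts) = (a \<in> fst A \<and> length ts = snd A a \<and> (\<forall>t\<in>set ts. wt A t))"

definition trees :: "'f ralph \<Rightarrow> 'f tree set" where
  "trees A = {s. wt A s}"

fun emb :: "'f tree \<Rightarrow> ('f, 'v) tr" where
  "emb (T a ts) = Nd a (map emb ts)"

text \<open>A rule (q, a, xi) stands for q(a(x_1,...,x_k)) -> xi, where a leaf Lf (q', i)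
  of xi stands for q'(x_i).\<close>
record ('q, 'f, 'g) tt =
  st :: "'q set"
  inp :: "'f ralph"
  outp :: "'g ralph"
  rl :: "('q \<times> 'f \<times> ('g, 'q \<times> nat) tr) set"
  q0 :: 'q

fun rhs_wf :: "'g ralph \<Rightarrow> 'q set \<Rightarrow> nat \<Rightarrow> ('g, 'q \<times> nat) tr \<Rightarrow> bool" where
  "rhs_wf D Q k (Nd g ts) = (g \<in> fst D \<and> length ts = snd D g \<and> (\<forall>t\<in>set ts. rhs_wf D Q k t))"
| "rhs_wf D Q k (Lf qi) = (fst qi \<in> Q \<and> 1 \<le> snd qi \<and> snd qi \<le> k)"

definition tdtt :: "('q, 'f, 'g) tt \<Rightarrow> bool" where
  "tdtt M \<longleftrightarrow> finite (st M) \<and> finite (fst (inp M)) \<and> finite (fst (outp M)) \<and>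
     finite (rl M) \<and> q0 M \<in> st M \<and>
     (\<forall>(q, a, \<xi>) \<in> rl M. q \<in> st M \<and> a \<in> fst (inp M) \<and> rhs_wf (outp M) (st M) (snd (inp M) a) \<xi>)"

fun subst_rhs :: "('g, 'q \<times> nat) tr \<Rightarrow> ('f, 'v) tr list \<Rightarrow> ('g, 'q \<times> ('f, 'v) tr) tr" where
  "subst_rhs (Nd g ts) ss = Nd g (map (\<lambda>t. subst_rhs t ss) ts)"
| "subst_rhs (Lf qi) ss = Lf (fst qi, ss ! (snd qi - 1))"

text \<open>One rewrite step on sentential forms: output symbols above, leaves
  Lf (q, s) standing for q(s) with s an input tree.  Leaves of the input of
  the form Lf v are unrewritable symbols (no rule applies to them).\<close>
inductive step :: "('q \<times> 'f \<times> ('g, 'q \<times> nat) tr) set \<Rightarrow>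
    ('g, 'q \<times> ('f, 'v) tr) tr \<Rightarrow> ('g, 'q \<times> ('f, 'v) tr) tr \<Rightarrow> bool"
  for R where
  root: "(q, a, \<xi>) \<in> R \<Longrightarrow> step R (Lf (q, Nd a ss)) (subst_rhs \<xi> ss)"
| ctx: "step R u u' \<Longrightarrow> step R (Nd g (ls @ u # rs)) (Nd g (ls @ u' # rs))"

definition derives where
  "derives R = (step R)\<^sup>*\<^sup>*"

definition rel :: "('q, 'f, 'g) tt \<Rightarrow> ('f tree \<times> 'g tree) set" where
  "rel M = {(s, t). s \<in> trees (inp M) \<and> t \<in> trees (outp M) \<and>
     derives (rl M) (Lf (q0 M, emb s :: ('f, unit) tr)) (emb t)}"

definition tdom :: "('q, 'f, 'g) tt \<Rightarrow> 'q \<Rightarrow> 'f tree set" where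
  "tdom M q = {s. s \<in> trees (inp M) \<and>
     (\<exists>t \<in> trees (outp M). derives (rl M) (Lf (q, emb s :: ('f, unit) tr)) (emb t))}"

definition rhs_of :: "('q, 'f, 'g) tt \<Rightarrow> 'q \<Rightarrow> 'f \<Rightarrow> ('g, 'q \<times> nat) tr set" where
  "rhs_of M q a = {\<xi>. (q, a, \<xi>) \<in> rl M}"

definition calls :: "('g, 'q \<times> nat) tr \<Rightarrow> nat \<Rightarrow> 'q set" where
  "calls \<xi> i = {q. (q, i) \<in> set2_tr \<xi>}"

definition calls_set :: "('g, 'q \<times> nat) tr set \<Rightarrow> nat \<Rightarrow> 'q set" where
  "calls_set \<Gamma> i = (\<Union>\<xi>\<in>\<Gamma>. calls \<xi> i)"

definition aut_rhs :: "'f \<Rightarrow> nat \<Rightarrow> (nat \<Rightarrow> 'p) \<Rightarrow> ('f, 'p \<times> nat) tr" where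
  "aut_rhs a k S = Nd a (map (\<lambda>i. Lf (S i, i)) [1..<Suc k])"

definition dom_aut :: "('q, 'f, 'g) tt \<Rightarrow> ('q set, 'f, 'f) tt" where
  "dom_aut M = \<lparr> st = Pow (st M), inp = inp M, outp = inp M,
     rl = {(S, a, aut_rhs a (snd (inp M) a) Si) | S a Si.
             a \<in> fst (inp M) \<and> S \<noteq> {} \<and> S \<subseteq> st M \<and>
             (\<exists>\<Gamma>. (\<forall>q\<in>S. \<Gamma> q \<noteq> {} \<and> \<Gamma> q \<subseteq> rhs_of M q a) \<and>
                  (\<forall>i. Si i = (\<Union>q\<in>S. calls_set (\<Gamma> q) i)))}
        \<union> {({}, a, aut_rhs a (snd (inp M) a) (\<lambda>_. {})) | a. a \<in> fst (inp M)},
     q0 = {q0 M} \<rparr>"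

text \<open>Turning p'(q''(x_i)) into (q'',p')(x_i).\<close>
fun conv_leaf :: "'p \<times> ('g, 'q \<times> nat) tr \<Rightarrow> ('q \<times> 'p) \<times> nat" where
  "conv_leaf (p', Lf (q'', i)) = ((q'', p'), i)"
| "conv_leaf (p', Nd _ _) = undefined"

text \<open>zeta is derivable from p(xi) using the rules of M', leaves of xi being
  unrewritable, and zeta is fully translated (all its leaves are p'(q''(x_i))).\<close>
definition translates :: "('p, 'g, 'h) tt \<Rightarrow> 'p \<Rightarrow> ('g, 'q \<times> nat) tr \<Rightarrow>
    ('h, 'p \<times> ('g, 'q \<times> nat) tr) tr \<Rightarrow> bool" where
  "translates M' p \<xi> \<zeta> \<longleftrightarrow> derives (rl M') (Lf (p, \<xi>)) \<zeta> \<and>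
     (\<forall>x \<in> set2_tr \<zeta>. \<exists>p' q'' i. x = (p', Lf (q'', i)))"

definition product :: "('q, 'f, 'g) tt \<Rightarrow> ('p, 'g, 'h) tt \<Rightarrow> ('q \<times> 'p, 'f, 'h) tt" where
  "product M M' = \<lparr> st = st M \<times> st M', inp = inp M, outp = outp M',
     rl = {((q, p), a, map_tr id conv_leaf \<zeta>) | q p a \<xi> \<zeta>.
             (q, a, \<xi>) \<in> rl M \<and> p \<in> st M' \<and> translates M' p \<xi> \<zeta>},
     q0 = (q0 M, q0 M') \<rparr>"

text \<open>A rule (q, a, [l_1,...,l_k], t) stands for q(a(x_1:l_1,...,x_k:l_k)) -> t.\<close>
record ('q, 'f, 'g, 'l) latt =
  lst :: "'q set"
  linp :: "'f ralph"
  loutp :: "'g ralph"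
  lrl :: "('q \<times> 'f \<times> 'l list \<times> ('g, 'q \<times> nat) tr) set"
  lq0 :: 'q
  la :: "('l, 'f, 'f) tt"

text \<open>Relabeling each node a by <a, l_1, ..., l_k> with the i-th subtree in dom(l_i).\<close>
inductive relabel :: "('l, 'f, 'f) tt \<Rightarrow> 'f tree \<Rightarrow> ('f \<times> 'l list) tree \<Rightarrow> bool" for B where
  "length ls = length ss \<Longrightarrow> length ss' = length ss \<Longrightarrow>
   (\<forall>i < length ss. ls ! i \<in> st B \<and> ss ! i \<in> tdom B (ls ! i) \<and> relabel B (ss ! i) (ss' ! i)) \<Longrightarrow>
   relabel B (T a ss) (T (a, ls) ss')"

definition la_rules :: "('q, 'f, 'g, 'l) latt \<Rightarrow> ('q \<times> ('f \<times> 'l list) \<times> ('g, 'q \<times> nat) tr) set" where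
  "la_rules M = {(q, (a, ls), t) | q a ls t. (q, a, ls, t) \<in> lrl M}"

definition la_rel :: "('q, 'f, 'g, 'l) latt \<Rightarrow> ('f tree \<times> 'g tree) set" where
  "la_rel M = {(s, r). s \<in> trees (linp M) \<and> r \<in> trees (loutp M) \<and>
     (\<exists>s'. relabel (la M) s s' \<and>
        derives (la_rules M) (Lf (lq0 M, emb s' :: ('f \<times> 'l list, unit) tr)) (emb r))}"

definition That1 :: "('q1, 'f, 'g) tt \<Rightarrow> ('q2, 'g, 'h) tt \<Rightarrow> ('q1 \<times> 'q2 set, 'f, 'g) tt" where
  "That1 T1 T2 = product T1 (dom_aut T2)"

definition constr_M :: "('q1, 'f, 'g) tt \<Rightarrow> ('q2, 'g, 'h) tt \<Rightarrow>
    (('q1 \<times> 'q2 set) \<times> 'q2, 'f, 'h, ('q1 \<times> 'q2 set) set) latt" where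
  "constr_M T1 T2 = \<lparr>
     lst = {((q, S), q'). q \<in> st T1 \<and> S \<subseteq> st T2 \<and> q' \<in> S},
     linp = inp T1, loutp = outp T2,
     lrl = {(((q, S), q'), a, ls, map_tr id conv_leaf \<zeta>) | q S q' a ls \<xi> \<zeta>.
              ((q, S), a, \<xi>) \<in> rl (That1 T1 T2) \<and> q' \<in> st T2 \<and> translates T2 q' \<xi> \<zeta> \<and>
              q' \<in> S \<and>
              (\<forall>((q'', S''), q''') \<in> fst ` set2_tr (map_tr id conv_leaf \<zeta>). q''' \<in> S'') \<and>
              length ls = snd (inp T1) a \<and>
              (\<forall>i < length ls. ls ! i \<in> st (dom_aut (That1 T1 T2)) \<and> calls \<xi> (Suc i) \<subseteq> ls ! i)},
     lq0 = ((q0 T1, {q0 T2}), q0 T2),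
     la = dom_aut (That1 T1 T2) \<rparr>"

end

theory Submission
  imports Defs
begin

text \<open>M always simulates the composition: it runs the product and T2 simultaneously, and on the
  canonical relabeling the look-ahead of a subtree is the set of states of the product that have
  an output on it.  M can produce more than the composition only because it processes the copies
  that T2 makes of one call of the product independently, i.e. on possibly different intermediate
  trees.  The look-ahead guarantees that every call of the product in a rule of M has an output,
  and the second component S of a state (q, S) of the product guarantees that every state of T2
  in S has an output on it.  So each run of M on a subtree extends to compositions on the whole
  input that differ only there; if the composition is functional, all these copies yield the same
  output, and M computes exactly the composition.\<close>


section \<open>Big-step semantics of rewriting with rules\<close>

inductive big_step :: "('q \<times> 'f \<times> ('g, 'q \<times> nat) tr) set \<Rightarrow>
    ('g, 'q \<times> ('f, 'v) tr) tr \<Rightarrow> ('g, 'q \<times> ('f, 'v) tr) tr \<Rightarrow> bool" for R where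
  big_step_Nd: "list_all2 (big_step R) us ws \<Longrightarrow> big_step R (Nd g us) (Nd g ws)"
| big_step_stuck: "big_step R (Lf (q, Lf v)) (Lf (q, Lf v))"
| big_step_rule: "(q, a, \<xi>) \<in> R \<Longrightarrow> big_step R (subst_rhs \<xi> ss) w \<Longrightarrow> big_step R (Lf (q, Nd a ss)) w"

lemma big_step_Nd_iff: "big_step R (Nd g us) W \<longleftrightarrow> (\<exists>ws. W = Nd g ws \<and> list_all2 (big_step R) us ws)"
  by (auto elim: big_step.cases intro: big_step_Nd)

lemma big_step_stuck_iff: "big_step R (Lf (q, Lf v)) W \<longleftrightarrow> W = Lf (q, Lf v)"
  by (auto elim: big_step.cases intro: big_step_stuck)

lemma big_step_Lf_Nd_iff:
  "big_step R (Lf (q, Nd a ss)) W \<longleftrightarrow> (\<exists>\<xi>. (q, a, \<xi>) \<in> R \<and> big_step R (subst_rhs \<xi> ss) W)"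
  by (auto elim: big_step.cases intro: big_step_rule)

definition normal_form :: "('g, 'q \<times> ('f, 'v) tr) tr \<Rightarrow> bool" where
  "normal_form W \<longleftrightarrow> (\<forall>x \<in> set2_tr W. \<exists>q v. x = (q, Lf v))"

lemma normal_form_emb: "normal_form (emb t)"
  by (induction t) (auto simp: normal_form_def)

lemma big_step_normal_form: "big_step R U W \<Longrightarrow> normal_form W"
proof (induction rule: big_step.induct)
  case (big_step_Nd us ws g)
  then show ?case unfolding normal_form_def
    by (auto simp: list_all2_conv_all_nth in_set_conv_nth) blast
qed (auto simp: normal_form_def)

lemma big_step_refl: "normal_form W \<Longrightarrow> big_step R W W"
proof (induction W)
  case (Nd g ws)
  then have "list_all2 (big_step R) ws ws"
    by (auto simp: normal_form_def list_all2_conv_all_nth)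
  then show ?case by (rule big_step_Nd)
qed (auto simp: normal_form_def intro: big_step_stuck)

lemma derives_trans: "derives R a b \<Longrightarrow> derives R b c \<Longrightarrow> derives R a c"
  unfolding derives_def by auto

lemma derives_ctx: "derives R u u' \<Longrightarrow> derives R (Nd g (ls @ u # rs)) (Nd g (ls @ u' # rs))"
  unfolding derives_def
  by (induction rule: rtranclp_induct) (auto intro: rtranclp.rtrancl_into_rtrancl step.ctx)

lemma derives_args: "list_all2 (derives R) us ws \<Longrightarrow> derives R (Nd g (ls @ us)) (Nd g (ls @ ws))"
proof (induction arbitrary: ls rule: list_all2_induct)
  case Nil
  then show ?case by (simp add: derives_def)
next
  case (Cons u us w ws)
  have "derives R (Nd g (ls @ u # us)) (Nd g (ls @ w # us))"
    using Cons.hyps(1) by (rule derives_ctx)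
  moreover have "derives R (Nd g ((ls @ [w]) @ us)) (Nd g ((ls @ [w]) @ ws))" by (rule Cons.IH)
  ultimately show ?case by (simp add: derives_trans)
qed

lemma big_step_derives: "big_step R U W \<Longrightarrow> derives R U W"
proof (induction rule: big_step.induct)
  case (big_step_Nd us ws g)
  then have "list_all2 (derives R) us ws" by (auto elim: list_all2_mono)
  then show ?case using derives_args[of R us ws g "[]"] by simp
next
  case (big_step_stuck q v)
  then show ?case by (simp add: derives_def)
next
  case (big_step_rule q a \<xi> ss w)
  then show ?case unfolding derives_def
    by (auto intro: converse_rtranclp_into_rtranclp step.root)
qed

lemma step_big_step: "step R U U' \<Longrightarrow> big_step R U' W \<Longrightarrow> big_step R U W"
proof (induction arbitrary: W rule: step.induct)
  case (root q a \<xi> ss)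
  then show ?case by (rule big_step_rule)
next
  case (ctx u u' g ls rs)
  from ctx.prems obtain ws1 w ws2 where "W = Nd g (ws1 @ w # ws2)" "list_all2 (big_step R) ls ws1"
    "big_step R u' w" "list_all2 (big_step R) rs ws2"
    by (auto simp: big_step_Nd_iff list_all2_append1 list_all2_Cons1)
  then show ?case using ctx.IH by (auto intro!: big_step_Nd list_all2_appendI)
qed

lemma derives_normal_form_iff:
  assumes "normal_form W"
  shows "derives R U W \<longleftrightarrow> big_step R U W"
proof
  assume "derives R U W"
  then show "big_step R U W"
    unfolding derives_def using assms
    by (induction rule: converse_rtranclp_induct) (auto intro: big_step_refl step_big_step)
qed (rule big_step_derives)

lemma derives_emb_iff: "derives R U (emb t) \<longleftrightarrow> big_step R U (emb t)"
  by (simp add: derives_normal_form_iff normal_form_emb)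

lemma translates_iff: "translates M p \<xi> \<zeta> \<longleftrightarrow> big_step (rl M) (Lf (p, \<xi>)) \<zeta>"
  unfolding translates_def
  using derives_normal_form_iff big_step_normal_form unfolding normal_form_def by fastforce


section \<open>Leafwise relations between trees\<close>

inductive leafwise :: "('v \<Rightarrow> ('g, 'w) tr \<Rightarrow> bool) \<Rightarrow> ('g, 'v) tr \<Rightarrow> ('g, 'w) tr \<Rightarrow> bool" for A where
  leafwise_Lf: "A x w \<Longrightarrow> leafwise A (Lf x) w"
| leafwise_Nd: "list_all2 (leafwise A) xs ws \<Longrightarrow> leafwise A (Nd g xs) (Nd g ws)"

lemma leafwise_Lf_iff: "leafwise A (Lf x) W \<longleftrightarrow> A x W"
  by (auto elim: leafwise.cases intro: leafwise_Lf)

lemma leafwise_Nd_iff: "leafwise A (Nd g xs) W \<longleftrightarrow> (\<exists>ws. W = Nd g ws \<and> list_all2 (leafwise A) xs ws)"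
  by (auto elim: leafwise.cases intro: leafwise_Nd)

lemma leafwise_leafD: "leafwise A z W \<Longrightarrow> x \<in> set2_tr z \<Longrightarrow> \<exists>w. A x w"
proof (induction rule: leafwise.induct)
  case (leafwise_Nd xs ws g)
  then show ?case by (auto simp: list_all2_conv_all_nth in_set_conv_nth)
qed auto

lemma leafwise_mono:
  "leafwise A z W \<Longrightarrow> (\<And>x w. x \<in> set2_tr z \<Longrightarrow> A x w \<Longrightarrow> B x w) \<Longrightarrow> leafwise B z W"
proof (induction rule: leafwise.induct)
  case (leafwise_Nd xs ws g)
  then have "list_all2 (leafwise B) xs ws"
    by (auto elim!: list.rel_mono_strong)
  then show ?case by (rule leafwise.leafwise_Nd)
qed (auto intro: leafwise.leafwise_Lf)

lemma leafwise_map_tr: "leafwise A (map_tr id f z) W \<longleftrightarrow> leafwise (\<lambda>x. A (f x)) z W"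
proof (induction z arbitrary: W)
  case (Nd g ts)
  then have "list_all2 (leafwise A) (map (map_tr id f) ts) ws \<longleftrightarrow>
      list_all2 (leafwise (\<lambda>x. A (f x))) ts ws" for ws
    by (auto simp: list_all2_conv_all_nth id_def)
  then show ?case by (simp add: leafwise_Nd_iff id_def)
qed (simp add: leafwise_Lf_iff)

lemma leafwise_factor:
  "leafwise A z W \<Longrightarrow> (\<And>x w. x \<in> set2_tr z \<Longrightarrow> A x w \<Longrightarrow> \<exists>y. B x y \<and> leafwise C y w)
   \<Longrightarrow> \<exists>Y. leafwise B z Y \<and> leafwise C Y W"
proof (induction rule: leafwise.induct)
  case (leafwise_Lf x w)
  then obtain y where "B x y" "leafwise C y w" by auto
  then show ?case by (auto intro: leafwise.leafwise_Lf)
next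
  case (leafwise_Nd xs ws g)
  have "\<exists>y. leafwise B (xs ! i) y \<and> leafwise C y (ws ! i)" if i: "i < length xs" for i
  proof -
    from i leafwise_Nd.IH have "(\<And>x w. x \<in> set2_tr (xs ! i) \<Longrightarrow> A x w \<Longrightarrow> \<exists>y. B x y \<and> leafwise C y w)
        \<Longrightarrow> \<exists>y. leafwise B (xs ! i) y \<and> leafwise C y (ws ! i)"
      by (auto simp: list_all2_conv_all_nth)
    then show ?thesis using leafwise_Nd.prems nth_mem[OF i] by (blast intro: tr.set_intros(3))
  qed
  then obtain ys where "\<forall>i<length xs. leafwise B (xs ! i) (ys i) \<and> leafwise C (ys i) (ws ! i)"
    by metis
  then have "list_all2 (leafwise B) xs (map ys [0..<length xs])"
    "list_all2 (leafwise C) (map ys [0..<length xs]) ws"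
    using leafwise_Nd.IH by (auto simp: list_all2_conv_all_nth)
  then show ?case by (auto intro: leafwise.leafwise_Nd)
qed

lemma emb_eq_Nd_iff: "emb t = Nd g ws \<longleftrightarrow> (\<exists>ts. t = T g ts \<and> ws = map emb ts)"
  by (cases t) auto

lemma emb_inject: "emb s = emb t \<longleftrightarrow> s = t"
proof (induction s arbitrary: t)
  case (T a ss)
  then show ?case by (cases t) (auto simp: list_eq_iff_nth_eq)
qed

lemma leafwise_emb_ground:
  "leafwise A z (emb t) \<Longrightarrow> leafwise (\<lambda>x w. A x w \<and> (\<exists>u. w = emb u)) z (emb t)"
proof (induction z arbitrary: t)
  case (Nd g zs)
  then show ?case
    by (auto simp: leafwise_Nd_iff emb_eq_Nd_iff list_all2_conv_all_nth intro!: leafwise_Nd)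
qed (auto simp: leafwise_Lf_iff)

text \<open>An embedded ground tree has no leaves, so its leaf type is immaterial.\<close>

lemma leafwise_emb_retype:
  "leafwise A z (emb t :: ('g, 'a) tr) \<Longrightarrow>
   (\<And>x u. x \<in> set2_tr z \<Longrightarrow> A x (emb u :: ('g, 'a) tr) \<Longrightarrow> B x (emb u :: ('g, 'b) tr)) \<Longrightarrow>
   leafwise B z (emb t :: ('g, 'b) tr)"
proof (induction z arbitrary: t)
  case (Nd g zs)
  then obtain ts where t: "t = T g ts" and l: "list_all2 (leafwise A) zs (map emb ts)"
    by (auto simp: leafwise_Nd_iff emb_eq_Nd_iff)
  have "leafwise B z (emb u)" if "z \<in> set zs" "leafwise A z (emb u)" for z u
    using Nd.IH[OF that] Nd.prems(2) that(1) by auto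
  then have "list_all2 (leafwise B) zs (map emb ts)"
    using l by (auto simp: list.rel_map elim!: list.rel_mono_strong)
  then show ?case using t by (auto intro: leafwise_Nd)
qed (auto simp: leafwise_Lf_iff)

fun graft :: "('x \<Rightarrow> 'h tree) \<Rightarrow> ('h, 'x) tr \<Rightarrow> 'h tree" where
  "graft g (Nd a zs) = T a (map (graft g) zs)"
| "graft g (Lf x) = g x"

lemma leafwise_graft: "(\<And>x. x \<in> set2_tr z \<Longrightarrow> A x (emb (g x))) \<Longrightarrow> leafwise A z (emb (graft g z))"
proof (induction z)
  case (Nd a zs)
  then have "list_all2 (leafwise A) zs (map (\<lambda>z. emb (graft g z)) zs)"
    by (auto simp: list.rel_map list_all2_same)
  then show ?case by (auto intro: leafwise_Nd simp: comp_def)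
qed (auto intro: leafwise_Lf)

lemma graft_eq_leafD: "graft g1 z = graft g2 z \<Longrightarrow> x \<in> set2_tr z \<Longrightarrow> g1 x = g2 x"
  by (induction z) (auto simp: map_eq_conv)


section \<open>Running right-hand sides\<close>

abbreviation ground :: "'f tree \<Rightarrow> ('f, unit) tr" where
  "ground \<equiv> emb"

abbreviation var_runs :: "('q \<times> 'f \<times> ('g, 'q \<times> nat) tr) set \<Rightarrow> ('f, 'v) tr list \<Rightarrow>
    'q \<times> nat \<Rightarrow> ('g, 'q \<times> ('f, 'v) tr) tr \<Rightarrow> bool" where
  "var_runs R ss \<equiv> \<lambda>(q, i) w. big_step R (Lf (q, ss ! (i - 1))) w"

lemma big_step_subst_rhs_iff: "big_step R (subst_rhs \<xi> ss) W \<longleftrightarrow> leafwise (var_runs R ss) \<xi> W"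
proof (induction \<xi> arbitrary: W)
  case (Nd g ts)
  then have "list_all2 (big_step R) (map (\<lambda>t. subst_rhs t ss) ts) ws \<longleftrightarrow>
        list_all2 (leafwise (var_runs R ss)) ts ws" for ws
    by (auto simp: list_all2_conv_all_nth)
  then show ?case by (simp add: big_step_Nd_iff leafwise_Nd_iff)
qed (auto simp: leafwise_Lf_iff)

lemma set2_subst_rhs:
  "x \<in> set2_tr (subst_rhs \<xi> ss) \<Longrightarrow> \<exists>q i. (q, i) \<in> set2_tr \<xi> \<and> x = (q, ss ! (i - 1))"
proof (induction \<xi>)
  case (Nd g ts)
  then obtain t where "t \<in> set ts" "x \<in> set2_tr (subst_rhs t ss)" by auto
  with Nd.IH show ?case by fastforce
qed auto

fun ranked :: "('f \<Rightarrow> nat) \<Rightarrow> ('f, 'v) tr \<Rightarrow> bool" where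
  "ranked rk (Nd a ts) = (length ts = rk a \<and> (\<forall>t\<in>set ts. ranked rk t))"
| "ranked rk (Lf v) = True"

definition inputs_ranked :: "('f \<Rightarrow> nat) \<Rightarrow> ('g, 'q \<times> ('f, 'v) tr) tr \<Rightarrow> bool" where
  "inputs_ranked rk U \<longleftrightarrow> (\<forall>(q, w)\<in>set2_tr U. ranked rk w)"

definition vars_in_range :: "('q \<times> 'f \<times> ('g, 'q \<times> nat) tr) set \<Rightarrow> ('f \<Rightarrow> nat) \<Rightarrow> bool" where
  "vars_in_range R rk \<longleftrightarrow> (\<forall>(q, a, \<xi>)\<in>R. \<forall>(q', i)\<in>set2_tr \<xi>. 1 \<le> i \<and> i \<le> rk a)"

lemma inputs_ranked_Nd: "inputs_ranked rk (Nd g us) \<longleftrightarrow> (\<forall>u\<in>set us. inputs_ranked rk u)"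
  by (auto simp: inputs_ranked_def)

lemma inputs_ranked_Lf: "inputs_ranked rk (Lf (q, w)) \<longleftrightarrow> ranked rk w"
  by (simp add: inputs_ranked_def)

lemma vars_in_rangeD:
  assumes "vars_in_range R rk" "(q, a, \<xi>) \<in> R" "inputs_ranked rk (Lf (q, Nd a ss))"
  shows "\<And>q' i. (q', i) \<in> set2_tr \<xi> \<Longrightarrow> 1 \<le> i \<and> i \<le> length ss"
  using assms by (fastforce simp: vars_in_range_def inputs_ranked_def)

lemma inputs_ranked_subst_rhs:
  assumes "vars_in_range R rk" "(q, a, \<xi>) \<in> R" "inputs_ranked rk (Lf (q, Nd a ss))"
  shows "inputs_ranked rk (subst_rhs \<xi> ss)"
  unfolding inputs_ranked_def
proof safe
  fix q' w assume "(q', w) \<in> set2_tr (subst_rhs \<xi> ss)"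
  then obtain i where "(q', i) \<in> set2_tr \<xi>" "w = ss ! (i - 1)"
    using set2_subst_rhs by fastforce
  with assms vars_in_rangeD[OF assms] show "ranked rk w" by (force simp: inputs_ranked_def)
qed

fun subst_tr :: "('v \<Rightarrow> ('f, 'w) tr) \<Rightarrow> ('f, 'v) tr \<Rightarrow> ('f, 'w) tr" where
  "subst_tr \<sigma> (Nd a us) = Nd a (map (subst_tr \<sigma>) us)"
| "subst_tr \<sigma> (Lf v) = \<sigma> v"

fun subst_inputs :: "('v \<Rightarrow> ('f, 'w) tr) \<Rightarrow> ('g, 'q \<times> ('f, 'v) tr) tr \<Rightarrow> ('g, 'q \<times> ('f, 'w) tr) tr" where
  "subst_inputs \<sigma> (Nd g us) = Nd g (map (subst_inputs \<sigma>) us)"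
| "subst_inputs \<sigma> (Lf (p, u)) = Lf (p, subst_tr \<sigma> u)"

lemma subst_tr_emb: "subst_tr (\<lambda>v. emb (g v)) z = emb (graft g z)"
  by (induction z) auto

lemma subst_rhs_subst_tr:
  "(\<And>q' i. (q', i) \<in> set2_tr \<xi> \<Longrightarrow> 1 \<le> i \<and> i \<le> length ss) \<Longrightarrow>
   subst_rhs \<xi> (map (subst_tr \<sigma>) ss) = subst_inputs \<sigma> (subst_rhs \<xi> ss)"
  by (induction \<xi>) auto

text \<open>A run that gets stuck at the input variables can be continued by runs on the trees
  substituted for them.\<close>

lemma big_step_subst_inputs:
  assumes "big_step R U Z" "inputs_ranked rk U" "vars_in_range R rk"
    "leafwise (\<lambda>(p, lv) w. \<exists>v. lv = Lf v \<and> big_step R (Lf (p, \<sigma> v)) w) Z W"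
  shows "big_step R (subst_inputs \<sigma> U) W"
  using assms
proof (induction arbitrary: W rule: big_step.induct)
  case (big_step_Nd us ws g)
  then obtain Ws where "W = Nd g Ws"
    "list_all2 (leafwise (\<lambda>(p, lv) w. \<exists>v. lv = Lf v \<and> big_step R (Lf (p, \<sigma> v)) w)) ws Ws"
    by (auto simp: leafwise_Nd_iff)
  with big_step_Nd show ?case
    by (auto simp: list_all2_conv_all_nth inputs_ranked_Nd intro!: big_step.big_step_Nd)
next
  case (big_step_stuck q v)
  then show ?case by (simp add: leafwise_Lf_iff)
next
  case (big_step_rule q a \<xi> ss w)
  have "subst_rhs \<xi> (map (subst_tr \<sigma>) ss) = subst_inputs \<sigma> (subst_rhs \<xi> ss)"
    using vars_in_rangeD[OF big_step_rule.prems(2) big_step_rule.hyps(1) big_step_rule.prems(1)]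
    by (rule subst_rhs_subst_tr)
  moreover have "big_step R (subst_inputs \<sigma> (subst_rhs \<xi> ss)) W"
    using big_step_rule.IH big_step_rule.prems(2,3)
      inputs_ranked_subst_rhs[OF big_step_rule.prems(2) big_step_rule.hyps(1) big_step_rule.prems(1)]
    by blast
  ultimately show ?case using big_step_rule.hyps(1) by (auto intro: big_step.big_step_rule)
qed

lemma big_step_stuck_leaf_origin:
  assumes "big_step R U Z" "inputs_ranked rk U" "vars_in_range R rk" "(p, Lf x) \<in> set2_tr Z"
  shows "\<exists>q w. (q, w) \<in> set2_tr U \<and> x \<in> set2_tr w"
  using assms
proof (induction rule: big_step.induct)
  case (big_step_Nd us ws g)
  then obtain i where i: "i < length us" "(p, Lf x) \<in> set2_tr (ws ! i)"
    by (auto simp: in_set_conv_nth list_all2_lengthD)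
  then have "inputs_ranked rk (us ! i)" using big_step_Nd.prems(1) by (simp add: inputs_ranked_Nd)
  then obtain q w where "(q, w) \<in> set2_tr (us ! i)" "x \<in> set2_tr w"
    using big_step_Nd.IH big_step_Nd.prems(2) i by (auto simp: list_all2_conv_all_nth)
  then show ?case using nth_mem[OF i(1)] by auto
next
  case (big_step_rule q a \<xi> ss w)
  obtain q' w' where "(q', w') \<in> set2_tr (subst_rhs \<xi> ss)" "x \<in> set2_tr w'"
    using big_step_rule.IH big_step_rule.prems(2,3)
      inputs_ranked_subst_rhs[OF big_step_rule.prems(2) big_step_rule.hyps(1) big_step_rule.prems(1)]
    by blast
  moreover from this(1) obtain i where "(q', i) \<in> set2_tr \<xi>" "w' = ss ! (i - 1)"
    using set2_subst_rhs by blast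
  moreover note vars_in_rangeD[OF big_step_rule.prems(2) big_step_rule.hyps(1) big_step_rule.prems(1)]
  ultimately have "w' \<in> set ss" by force
  with \<open>x \<in> set2_tr w'\<close> show ?case by auto
qed auto

lemma big_step_through_children:
  assumes "(p, g, \<rho>) \<in> R" "big_step R (subst_rhs \<rho> (map ground ts)) (emb r)"
    "\<And>q i u. (q, i) \<in> set2_tr \<rho> \<Longrightarrow> big_step R (Lf (q, map ground ts ! (i - 1))) (emb u) \<Longrightarrow>
       \<exists>\<zeta>. big_step R (Lf (q, zs ! (i - 1))) \<zeta> \<and> leafwise L \<zeta> (emb u :: ('h, 'w) tr)"
  shows "\<exists>\<zeta>. big_step R (Lf (p, Nd g zs)) \<zeta> \<and> leafwise L \<zeta> (emb r :: ('h, 'w) tr)"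
proof -
  have "leafwise (var_runs R (map ground ts)) \<rho> (emb r)"
    using assms(2) by (simp add: big_step_subst_rhs_iff)
  then have "leafwise (\<lambda>x w. \<exists>u. w = emb u \<and> var_runs R (map ground ts) x (emb u)) \<rho>
      (emb r :: ('h, 'w) tr)"
    by (rule leafwise_emb_retype) blast
  then obtain Z where "leafwise (var_runs R zs) \<rho> Z" "leafwise L Z (emb r :: ('h, 'w) tr)"
    using leafwise_factor[where B = "var_runs R zs" and C = L] assms(3) by fastforce
  moreover from this(1) have "big_step R (Lf (p, Nd g zs)) Z"
    using big_step_rule[OF assms(1)] big_step_subst_rhs_iff by blast
  ultimately show ?thesis by blast
qed


section \<open>Well-typed runs\<close>

fun wt_tr :: "'g ralph \<Rightarrow> ('g, 'v) tr \<Rightarrow> bool" where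
  "wt_tr D (Nd g ws) = (g \<in> fst D \<and> length ws = snd D g \<and> (\<forall>w\<in>set ws. wt_tr D w))"
| "wt_tr D (Lf v) = True"

definition inputs_wt :: "'f ralph \<Rightarrow> ('g, 'q \<times> ('f, 'v) tr) tr \<Rightarrow> bool" where
  "inputs_wt A U \<longleftrightarrow> (\<forall>(q, w)\<in>set2_tr U. \<exists>s. w = emb s \<and> wt A s)"

definition rules_wf :: "('q, 'f, 'g) tt \<Rightarrow> bool" where
  "rules_wf M \<longleftrightarrow> (\<forall>(q, a, \<xi>)\<in>rl M. rhs_wf (outp M) (st M) (snd (inp M) a) \<xi>)"

lemma tdtt_rules_wf: "tdtt M \<Longrightarrow> rules_wf M"
  by (auto simp: tdtt_def rules_wf_def)

lemma rules_wfD: "rules_wf M \<Longrightarrow> (q, a, \<xi>) \<in> rl M \<Longrightarrow> rhs_wf (outp M) (st M) (snd (inp M) a) \<xi>"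
  by (auto simp: rules_wf_def)

lemma rhs_wf_leafD: "rhs_wf D Q k \<xi> \<Longrightarrow> (q, i) \<in> set2_tr \<xi> \<Longrightarrow> q \<in> Q \<and> 1 \<le> i \<and> i \<le> k"
  by (induction \<xi>) auto

lemma rhs_wf_ranked: "rhs_wf D Q k \<xi> \<Longrightarrow> ranked (snd D) \<xi>"
  by (induction \<xi>) auto

lemma rhs_wf_wt_tr: "rhs_wf D Q k \<xi> \<Longrightarrow> wt_tr D \<xi>"
  by (induction \<xi>) auto

lemma rhs_wf_wt_subst_rhs: "rhs_wf D Q k \<xi> \<Longrightarrow> wt_tr D (subst_rhs \<xi> ss)"
  by (induction \<xi>) auto

lemma rules_wf_vars_in_range: "rules_wf M \<Longrightarrow> vars_in_range (rl M) (snd (inp M))"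
  unfolding rules_wf_def vars_in_range_def using rhs_wf_leafD by fastforce

lemma wt_tr_emb: "wt_tr D (emb t) \<longleftrightarrow> wt D t"
  by (induction t) auto

lemma inputs_wt_subst_rhs:
  assumes "rhs_wf D Q (snd A a) \<xi>" "wt A (T a ss)"
  shows "inputs_wt A (subst_rhs \<xi> (map emb ss))"
  unfolding inputs_wt_def
proof safe
  fix q w assume "(q, w) \<in> set2_tr (subst_rhs \<xi> (map emb ss))"
  then obtain i where "(q, i) \<in> set2_tr \<xi>" "w = map emb ss ! (i - 1)"
    using set2_subst_rhs by blast
  with rhs_wf_leafD[OF assms(1)] assms(2) show "\<exists>s. w = emb s \<and> wt A s" by force
qed

lemma big_step_wt_tr:
  assumes "big_step (rl M) U W" "rules_wf M" "inputs_wt (inp M) U" "wt_tr (outp M) U"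
  shows "wt_tr (outp M) W"
  using assms
proof (induction rule: big_step.induct)
  case (big_step_Nd us ws g)
  have "wt_tr (outp M) (ws ! i)" if i: "i < length us" for i
  proof -
    have "inputs_wt (inp M) (us ! i)" "wt_tr (outp M) (us ! i)"
      using big_step_Nd.prems(2,3) nth_mem[OF i] by (auto simp: inputs_wt_def)
    then show ?thesis
      using big_step_Nd.IH big_step_Nd.prems(1) i by (auto simp: list_all2_conv_all_nth)
  qed
  then show ?case
    using big_step_Nd.prems(3) list_all2_lengthD[OF big_step_Nd.IH] by (auto simp: in_set_conv_nth)
next
  case (big_step_rule q a \<xi> ss w)
  then obtain s where "Nd a ss = emb s" "wt (inp M) s" by (auto simp: inputs_wt_def)
  then obtain ss0 where wt: "wt (inp M) (T a ss0)" and ss: "ss = map emb ss0"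
    by (cases s) auto
  have rhs: "rhs_wf (outp M) (st M) (snd (inp M) a) \<xi>"
    by (rule rules_wfD[OF big_step_rule.prems(1) big_step_rule.hyps(1)])
  have "inputs_wt (inp M) (subst_rhs \<xi> ss)" "wt_tr (outp M) (subst_rhs \<xi> ss)"
    using inputs_wt_subst_rhs[OF rhs wt] rhs_wf_wt_subst_rhs[OF rhs] ss by simp_all
  then show ?case using big_step_rule.IH big_step_rule.prems(1) by blast
qed auto

lemma big_step_emb_wt:
  assumes "big_step (rl M) (Lf (q, emb s)) (emb t)" "rules_wf M" "wt (inp M) s"
  shows "wt (outp M) t"
  using big_step_wt_tr[OF assms(1,2)] assms(3) by (auto simp: inputs_wt_def wt_tr_emb)


section \<open>The domain automaton\<close>

definition defined_on :: "('q, 'f, 'g) tt \<Rightarrow> 'q set \<Rightarrow> 'f tree \<Rightarrow> bool" where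
  "defined_on M S s \<longleftrightarrow> S \<subseteq> st M \<and> (\<forall>q\<in>S. \<exists>t. big_step (rl M) (Lf (q, ground s)) (emb t))"

lemma dom_aut_simps [simp]:
  "st (dom_aut M) = Pow (st M)" "inp (dom_aut M) = inp M" "outp (dom_aut M) = inp M"
  by (simp_all add: dom_aut_def)

lemma dom_aut_ruleE:
  assumes "(S, a, \<rho>) \<in> rl (dom_aut M)"
  obtains Si where "\<rho> = aut_rhs a (snd (inp M) a) Si" "a \<in> fst (inp M)"
    "\<And>i. Si i \<subseteq> (\<Union>q\<in>S. calls_set (rhs_of M q a) i)"
    "\<And>q. q \<in> S \<Longrightarrow> \<exists>\<xi>\<in>rhs_of M q a. \<forall>i. calls \<xi> i \<subseteq> Si i"
proof -
  consider "S = {}" "\<rho> = aut_rhs a (snd (inp M) a) (\<lambda>_. {})" "a \<in> fst (inp M)"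
    | Si \<Gamma> where "\<rho> = aut_rhs a (snd (inp M) a) Si" "a \<in> fst (inp M)"
        "\<forall>q\<in>S. \<Gamma> q \<noteq> {} \<and> \<Gamma> q \<subseteq> rhs_of M q a" "\<forall>i. Si i = (\<Union>q\<in>S. calls_set (\<Gamma> q) i)"
    using assms unfolding dom_aut_def by auto
  then show ?thesis
  proof cases
    case (2 Si \<Gamma>)
    show ?thesis
    proof (rule that[OF 2(1,2)])
      show "Si i \<subseteq> (\<Union>q\<in>S. calls_set (rhs_of M q a) i)" for i
        using 2(3,4) by (fastforce simp: calls_set_def)
      show "\<exists>\<xi>\<in>rhs_of M q a. \<forall>i. calls \<xi> i \<subseteq> Si i" if "q \<in> S" for q
        using 2(3,4) that by (fastforce simp: calls_set_def)
    qed
  qed (auto intro: that)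
qed

lemma dom_aut_ruleI:
  assumes "a \<in> fst (inp M)" "S \<subseteq> st M" "\<And>q. q \<in> S \<Longrightarrow> \<Gamma> q \<noteq> {} \<and> \<Gamma> q \<subseteq> rhs_of M q a"
  shows "(S, a, aut_rhs a (snd (inp M) a) (\<lambda>i. \<Union>q\<in>S. calls_set (\<Gamma> q) i)) \<in> rl (dom_aut M)"
proof (cases "S = {}")
  case True
  then show ?thesis using assms(1) by (simp add: dom_aut_def)
next
  case False
  then show ?thesis using assms unfolding dom_aut_def by simp blast
qed

lemma subst_rhs_aut_rhs:
  "subst_rhs (aut_rhs a k Si) xs = Nd a (map (\<lambda>j. Lf (Si (Suc j), xs ! j)) [0..<k])"
proof -
  have "[1..<Suc k] = map Suc [0..<k]" by (simp add: map_Suc_upt)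
  then show ?thesis by (simp add: aut_rhs_def)
qed

lemma big_step_aut_rhs_iff:
  "big_step R (subst_rhs (aut_rhs a k Si) xs) W \<longleftrightarrow>
   (\<exists>ws. W = Nd a ws \<and> length ws = k \<and> (\<forall>j<k. big_step R (Lf (Si (Suc j), xs ! j)) (ws ! j)))"
  by (auto simp: subst_rhs_aut_rhs big_step_Nd_iff list_all2_conv_all_nth)

lemma calls_set_rhs_of_subset:
  "rules_wf M \<Longrightarrow> calls_set (rhs_of M q a) i \<subseteq> st M"
  by (auto simp: calls_set_def calls_def rhs_of_def dest: rules_wfD rhs_wf_leafD)

lemma subst_rhs_var_run:
  assumes "big_step R (subst_rhs \<rho> ss) (emb t)" "(q, i) \<in> set2_tr \<rho>"
  shows "\<exists>t'. big_step R (Lf (q, ss ! (i - 1))) (emb t')"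
proof -
  have "leafwise (var_runs R ss) \<rho> (emb t)"
    using assms(1) by (simp add: big_step_subst_rhs_iff)
  from leafwise_leafD[OF leafwise_emb_ground[OF this] assms(2)] show ?thesis by auto
qed

text \<open>The rule of the domain automaton that collects the calls of all rules that lead to an output.\<close>

lemma dom_aut_rule_for_defined:
  assumes "rules_wf M" "a \<in> fst (inp M)" "length ss = snd (inp M) a" "defined_on M S (T a ss)"
  obtains Si where "(S, a, aut_rhs a (snd (inp M) a) Si) \<in> rl (dom_aut M)"
    "\<And>j. j < length ss \<Longrightarrow> defined_on M (Si (Suc j)) (ss ! j)"
    "\<And>q t. q \<in> S \<Longrightarrow> big_step (rl M) (Lf (q, ground (T a ss))) (emb t) \<Longrightarrow>
       \<exists>\<rho>. (q, a, \<rho>) \<in> rl M \<and> big_step (rl M) (subst_rhs \<rho> (map ground ss)) (emb t) \<and>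
         (\<forall>(q', i)\<in>set2_tr \<rho>. q' \<in> Si i)"
proof -
  define V where "V q = {\<rho>. (q, a, \<rho>) \<in> rl M \<and>
    (\<exists>t. big_step (rl M) (subst_rhs \<rho> (map ground ss)) (emb t))}" for q
  define Si where "Si = (\<lambda>i. \<Union>q\<in>S. calls_set (V q) i)"
  have V_run: "\<rho> \<in> V q" if "(q, a, \<rho>) \<in> rl M"
    "big_step (rl M) (subst_rhs \<rho> (map ground ss)) (emb t)" for q \<rho> t
    using that unfolding V_def by blast
  have V_nonempty: "V q \<noteq> {}" if "q \<in> S" for q
    using assms(4) that V_run by (fastforce simp: defined_on_def big_step_Lf_Nd_iff)
  have rule: "(S, a, aut_rhs a (snd (inp M) a) Si) \<in> rl (dom_aut M)"
    unfolding Si_def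
  proof (rule dom_aut_ruleI[OF assms(2)])
    show "S \<subseteq> st M" using assms(4) by (simp add: defined_on_def)
    show "V q \<noteq> {} \<and> V q \<subseteq> rhs_of M q a" if "q \<in> S" for q
      using V_nonempty[OF that] by (auto simp: rhs_of_def V_def)
  qed
  have children: "defined_on M (Si (Suc j)) (ss ! j)" if "j < length ss" for j
    using that rhs_wf_leafD[OF rules_wfD[OF assms(1)]] subst_rhs_var_run
    by (fastforce simp: defined_on_def Si_def V_def calls_set_def calls_def)
  have "\<exists>\<rho>. (q, a, \<rho>) \<in> rl M \<and> big_step (rl M) (subst_rhs \<rho> (map ground ss)) (emb t) \<and>
      (\<forall>(q', i)\<in>set2_tr \<rho>. q' \<in> Si i)"
    if "q \<in> S" "big_step (rl M) (Lf (q, ground (T a ss))) (emb t)" for q t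
  proof -
    from that(2) obtain \<rho> where "(q, a, \<rho>) \<in> rl M"
      "big_step (rl M) (subst_rhs \<rho> (map ground ss)) (emb t)"
      by (auto simp: big_step_Lf_Nd_iff)
    with V_run[OF this] that(1) show ?thesis by (auto simp: Si_def calls_set_def calls_def)
  qed
  with rule children show ?thesis by (rule that)
qed

lemma dom_aut_sound:
  assumes "rules_wf M" "wt (inp M) s" "big_step (rl (dom_aut M)) (Lf (S, ground s)) W" "q \<in> S"
  shows "\<exists>t. big_step (rl M) (Lf (q, ground s)) (emb t)"
  using assms(2-)
proof (induction s arbitrary: S W q)
  case (T a ss)
  from T.prems(2) obtain \<rho> where rule: "(S, a, \<rho>) \<in> rl (dom_aut M)"
    and acc: "big_step (rl (dom_aut M)) (subst_rhs \<rho> (map ground ss)) W"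
    by (auto simp: big_step_Lf_Nd_iff)
  obtain Si where \<rho>: "\<rho> = aut_rhs a (snd (inp M) a) Si"
    and "\<exists>\<xi>\<in>rhs_of M q a. \<forall>i. calls \<xi> i \<subseteq> Si i"
    by (rule dom_aut_ruleE[OF rule]) (use T.prems(3) in blast)
  then obtain \<xi> where \<xi>: "(q, a, \<xi>) \<in> rl M" "\<forall>i. calls \<xi> i \<subseteq> Si i"
    by (auto simp: rhs_of_def)
  have vars: "1 \<le> i \<and> i \<le> length ss" if "(q', i) \<in> set2_tr \<xi>" for q' i
    using rhs_wf_leafD[OF rules_wfD[OF assms(1) \<xi>(1)] that] T.prems(1) by auto
  from acc obtain ws where children:
    "\<And>j. j < length ss \<Longrightarrow> big_step (rl (dom_aut M)) (Lf (Si (Suc j), ground (ss ! j))) (ws ! j)"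
    using T.prems(1) by (auto simp: \<rho> big_step_aut_rhs_iff)
  have "\<exists>t. big_step (rl M) (Lf (q', ground (ss ! (i - 1)))) (emb t)" if x: "(q', i) \<in> set2_tr \<xi>" for q' i
  proof -
    have i: "i - 1 < length ss" "Suc (i - 1) = i" using vars[OF x] by auto
    have "q' \<in> Si (Suc (i - 1))" using \<xi>(2) x i(2) by (auto simp: calls_def)
    moreover have "wt (inp M) (ss ! (i - 1))" using T.prems(1) i(1) by auto
    ultimately show ?thesis using T.IH[OF nth_mem[OF i(1)] _ children[OF i(1)]] by blast
  qed
  then have "\<forall>x\<in>set2_tr \<xi>. \<exists>t. var_runs (rl M) (map ground ss) x (emb t)"
    using vars by fastforce
  from bchoice[OF this] obtain ts where "\<forall>x\<in>set2_tr \<xi>. var_runs (rl M) (map ground ss) x (emb (ts x))" ..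
  then have "leafwise (var_runs (rl M) (map ground ss)) \<xi> (emb (graft ts \<xi>))"
    by (intro leafwise_graft) blast
  then have "big_step (rl M) (subst_rhs \<xi> (map ground ss)) (emb (graft ts \<xi>))"
    by (simp only: big_step_subst_rhs_iff)
  then show ?case using \<xi>(1) by (auto intro: big_step_rule)
qed

lemma dom_aut_complete:
  assumes "rules_wf M" "wt (inp M) s" "defined_on M S s"
  shows "big_step (rl (dom_aut M)) (Lf (S, ground s)) (emb s)"
  using assms(2,3)
proof (induction s arbitrary: S)
  case (T a ss)
  then have a: "a \<in> fst (inp M)" "length ss = snd (inp M) a" by auto
  obtain Si where rule: "(S, a, aut_rhs a (snd (inp M) a) Si) \<in> rl (dom_aut M)"
    and children: "\<And>j. j < length ss \<Longrightarrow> defined_on M (Si (Suc j)) (ss ! j)"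
    by (rule dom_aut_rule_for_defined[OF assms(1) a T.prems(2)]) blast
  have "big_step (rl (dom_aut M)) (subst_rhs (aut_rhs a (snd (inp M) a) Si) (map ground ss)) (emb (T a ss))"
    using T children by (auto simp: big_step_aut_rhs_iff)
  with rule show ?case by (auto intro: big_step_rule)
qed


section \<open>Translating right-hand sides with the domain automaton\<close>

definition conv :: "('h, 'p \<times> ('g, 'q \<times> nat) tr) tr \<Rightarrow> ('h, ('q \<times> 'p) \<times> nat) tr" where
  "conv = map_tr id conv_leaf"

lemma conv_simps [simp]: "conv (Nd g zs) = Nd g (map conv zs)" "conv (Lf x) = Lf (conv_leaf x)"
  by (simp_all add: conv_def)

lemma set2_conv: "set2_tr (conv z) = conv_leaf ` set2_tr z"
  by (simp add: conv_def tr.set_map)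

lemma leafwise_conv_iff: "leafwise A (conv z) W \<longleftrightarrow> leafwise (\<lambda>x. A (conv_leaf x)) z W"
  unfolding conv_def by (rule leafwise_map_tr)

fun strip_states :: "('g, 's \<times> ('g, 'v) tr) tr \<Rightarrow> ('g, 'v) tr" where
  "strip_states (Nd g zs) = Nd g (map strip_states zs)"
| "strip_states (Lf (S, lv)) = lv"

lemma dom_aut_translation_shape:
  assumes "rules_wf M" "ranked (snd (inp M)) \<xi>" "big_step (rl (dom_aut M)) (Lf (S, \<xi>)) \<zeta>" "S \<subseteq> st M"
  shows "strip_states \<zeta> = \<xi> \<and> (\<forall>(S', lv)\<in>set2_tr \<zeta>. S' \<subseteq> st M \<and> (\<exists>v. lv = Lf v))"
  using assms(2-)
proof (induction \<xi> arbitrary: S \<zeta>)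
  case (Nd g \<xi>s)
  from Nd.prems(2) obtain \<rho> where rule: "(S, g, \<rho>) \<in> rl (dom_aut M)"
    and run: "big_step (rl (dom_aut M)) (subst_rhs \<rho> \<xi>s) \<zeta>"
    by (auto simp: big_step_Lf_Nd_iff)
  obtain Si where \<rho>: "\<rho> = aut_rhs g (snd (inp M) g) Si" and Si: "\<And>i. Si i \<subseteq> st M"
    by (rule dom_aut_ruleE[OF rule]) (use calls_set_rhs_of_subset[OF assms(1)] in blast)
  from run obtain ws where ws: "\<zeta> = Nd g ws" "length ws = length \<xi>s"
    "\<And>j. j < length \<xi>s \<Longrightarrow> big_step (rl (dom_aut M)) (Lf (Si (Suc j), \<xi>s ! j)) (ws ! j)"
    using Nd.prems(1) by (auto simp: \<rho> big_step_aut_rhs_iff)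
  have IH: "strip_states (ws ! j) = \<xi>s ! j \<and> (\<forall>(S', lv)\<in>set2_tr (ws ! j). S' \<subseteq> st M \<and> (\<exists>v. lv = Lf v))"
    if "j < length \<xi>s" for j
    using Nd.IH[OF nth_mem[OF that] _ ws(3)[OF that] Si] Nd.prems(1) that by auto
  then have "map strip_states ws = \<xi>s" using ws(2) by (auto intro: nth_equalityI)
  moreover have "\<forall>(S', lv)\<in>set2_tr (ws ! j). S' \<subseteq> st M \<and> (\<exists>v. lv = Lf v)" if "j < length ws" for j
    using IH ws(2) that by simp
  ultimately show ?case using ws(1) by (fastforce simp: in_set_conv_nth)
qed (simp add: big_step_stuck_iff)

lemma leafwise_conv_strip_states:
  assumes "\<forall>(S, lv)\<in>set2_tr \<zeta>. \<exists>v. lv = Lf v" "leafwise A (conv \<zeta>) W"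
  shows "leafwise (\<lambda>(q, i) w. \<exists>S. A ((q, S), i) w) (strip_states \<zeta>) W"
  using assms
proof (induction \<zeta> arbitrary: W)
  case (Nd g zs)
  then obtain Ws where "W = Nd g Ws" "list_all2 (leafwise A) (map conv zs) Ws"
    by (auto simp: leafwise_Nd_iff)
  with Nd show ?case by (auto simp: list_all2_conv_all_nth intro!: leafwise_Nd)
next
  case (Lf x)
  then obtain S q i where "x = (S, Lf (q, i))" by auto
  with Lf.prems(2) show ?case by (auto simp: leafwise_Lf_iff)
qed

lemma rhs_wf_conv:
  assumes "rhs_wf D Q k (strip_states \<zeta>)" "\<forall>(S, lv)\<in>set2_tr \<zeta>. S \<subseteq> Q' \<and> (\<exists>v. lv = Lf v)"
  shows "rhs_wf D (Q \<times> Pow Q') k (conv \<zeta>)"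
  using assms
proof (induction \<zeta>)
  case (Lf x)
  then obtain S q i where "x = (S, Lf (q, i))" by auto
  with Lf.prems show ?case by auto
qed auto

lemma dom_aut_accepts_graft:
  assumes "ranked (snd (inp M)) \<xi>" "big_step (rl (dom_aut M)) (Lf (S, \<xi>)) \<zeta>"
    "leafwise A (conv \<zeta>) (emb t)"
    "\<And>q S' i u. ((q, S'), i) \<in> set2_tr (conv \<zeta>) \<Longrightarrow> A ((q, S'), i) (emb u) \<Longrightarrow>
       big_step (rl (dom_aut M)) (Lf (S', ground u)) (emb u)"
  shows "big_step (rl (dom_aut M)) (Lf (S, ground t)) (emb t)"
  using assms
proof (induction \<xi> arbitrary: S \<zeta> t)
  case (Nd g \<xi>s)
  let ?k = "snd (inp M) g"
  from Nd.prems(2) obtain \<rho> where rule: "(S, g, \<rho>) \<in> rl (dom_aut M)"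
    and run: "big_step (rl (dom_aut M)) (subst_rhs \<rho> \<xi>s) \<zeta>"
    by (auto simp: big_step_Lf_Nd_iff)
  obtain Si where \<rho>: "\<rho> = aut_rhs g ?k Si"
    by (rule dom_aut_ruleE[OF rule]) blast
  from run obtain ws where ws: "\<zeta> = Nd g ws" "length ws = ?k"
    "\<And>j. j < ?k \<Longrightarrow> big_step (rl (dom_aut M)) (Lf (Si (Suc j), \<xi>s ! j)) (ws ! j)"
    by (auto simp: \<rho> big_step_aut_rhs_iff)
  from Nd.prems(3) ws(1) obtain ts where t: "t = T g ts"
    and children: "list_all2 (leafwise A) (map conv ws) (map emb ts)"
    by (cases t) (auto simp: leafwise_Nd_iff)
  have "big_step (rl (dom_aut M)) (Lf (Si (Suc j), ground (ts ! j))) (emb (ts ! j))"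
    if j: "j < ?k" for j
  proof (rule Nd.IH[OF nth_mem _ ws(3)[OF j]])
    show "j < length \<xi>s" "ranked (snd (inp M)) (\<xi>s ! j)"
      using Nd.prems(1) j by auto
    show "leafwise A (conv (ws ! j)) (emb (ts ! j))"
      using children j ws(2) by (auto simp: list_all2_conv_all_nth)
    show "big_step (rl (dom_aut M)) (Lf (S', ground u)) (emb u)"
      if "((q, S'), i) \<in> set2_tr (conv (ws ! j))" "A ((q, S'), i) (emb u)" for q S' i u
      using Nd.prems(4) that nth_mem[of j ws] j ws by (metis conv_simps(1) set_map tr.set_intros(3) imageI)
  qed
  moreover have "length ts = ?k"
    using children ws(2) by (auto dest: list_all2_lengthD)
  ultimately have "big_step (rl (dom_aut M)) (subst_rhs \<rho> (map ground ts)) (emb t)"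
    by (auto simp: \<rho> t big_step_aut_rhs_iff)
  with rule show ?case by (auto simp: t intro: big_step_rule)
next
  case (Lf v)
  then obtain q i where "\<zeta> = Lf (S, Lf (q, i))" by (cases v) (auto simp: big_step_stuck_iff)
  with Lf.prems(3,4) show ?case by (auto simp: leafwise_Lf_iff emb_inject)
qed


section \<open>The product of T1 with the domain automaton of T2\<close>

locale tt_composition =
  fixes T1 :: "('q1, 'f, 'g) tt" and T2 :: "('q2, 'g, 'h) tt"
  assumes tdtt_T1: "tdtt T1" and tdtt_T2: "tdtt T2" and outp_T1: "outp T1 = inp T2"
begin

abbreviation That :: "('q1 \<times> 'q2 set, 'f, 'g) tt" where
  "That \<equiv> That1 T1 T2"

abbreviation DA :: "('q2 set, 'g, 'g) tt" where
  "DA \<equiv> dom_aut T2"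

abbreviation run1 :: "'q1 \<Rightarrow> 'f tree \<Rightarrow> 'g tree \<Rightarrow> bool" where
  "run1 q s t \<equiv> big_step (rl T1) (Lf (q, ground s)) (emb t)"

abbreviation run2 :: "'q2 \<Rightarrow> 'g tree \<Rightarrow> 'h tree \<Rightarrow> bool" where
  "run2 q t r \<equiv> big_step (rl T2) (Lf (q, ground t)) (emb r)"

abbreviation runH :: "'q1 \<times> 'q2 set \<Rightarrow> 'f tree \<Rightarrow> 'g tree \<Rightarrow> bool" where
  "runH P s t \<equiv> big_step (rl That) (Lf (P, ground s)) (emb t)"

lemma rules_wf_T1: "rules_wf T1"
  using tdtt_T1 by (rule tdtt_rules_wf)

lemma rules_wf_T2: "rules_wf T2"
  using tdtt_T2 by (rule tdtt_rules_wf)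

lemma That_simps [simp]:
  "st That = st T1 \<times> Pow (st T2)" "inp That = inp T1" "outp That = inp T2"
  "q0 That = (q0 T1, {q0 T2})"
  by (simp_all add: That1_def product_def dom_aut_def)

lemma That_rule_iff: "((q, S), a, \<eta>) \<in> rl That \<longleftrightarrow>
  (\<exists>\<xi> \<zeta>. \<eta> = conv \<zeta> \<and> (q, a, \<xi>) \<in> rl T1 \<and> S \<subseteq> st T2 \<and> big_step (rl DA) (Lf (S, \<xi>)) \<zeta>)"
  unfolding That1_def product_def conv_def by (auto simp: translates_iff)

lemma T1_rule_ranked: "(q, a, \<xi>) \<in> rl T1 \<Longrightarrow> ranked (snd (inp T2)) \<xi>"
  using rhs_wf_ranked[OF rules_wfD[OF rules_wf_T1]] outp_T1 by metis

lemma T1_rule_wt_tr: "(q, a, \<xi>) \<in> rl T1 \<Longrightarrow> wt_tr (inp T2) \<xi>"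
  using rhs_wf_wt_tr[OF rules_wfD[OF rules_wf_T1]] outp_T1 by metis

lemma That_rule_shape:
  assumes "(q, a, \<xi>) \<in> rl T1" "S \<subseteq> st T2" "big_step (rl DA) (Lf (S, \<xi>)) \<zeta>"
  shows "strip_states \<zeta> = \<xi> \<and> (\<forall>(S', lv)\<in>set2_tr \<zeta>. S' \<subseteq> st T2 \<and> (\<exists>v. lv = Lf v))"
  using dom_aut_translation_shape[OF rules_wf_T2 T1_rule_ranked[OF assms(1)] assms(3,2)] .

lemma rules_wf_That: "rules_wf That"
  unfolding rules_wf_def
proof safe
  fix q S a \<eta> assume "((q, S), a, \<eta>) \<in> rl That"
  then obtain \<xi> \<zeta> where \<eta>: "\<eta> = conv \<zeta>" and rule: "(q, a, \<xi>) \<in> rl T1" "S \<subseteq> st T2"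
    "big_step (rl DA) (Lf (S, \<xi>)) \<zeta>"
    by (auto simp: That_rule_iff)
  have "rhs_wf (outp T1) (st T1) (snd (inp T1) a) (strip_states \<zeta>)"
    using rules_wfD[OF rules_wf_T1 rule(1)] That_rule_shape[OF rule] by simp
  from rhs_wf_conv[OF this] That_rule_shape[OF rule]
  show "rhs_wf (outp That) (st That) (snd (inp That) a) \<eta>"
    by (simp add: \<eta> outp_T1)
qed

lemma That_rule_varD:
  "((q, S), a, \<eta>) \<in> rl That \<Longrightarrow> (P, i) \<in> set2_tr \<eta> \<Longrightarrow> P \<in> st That \<and> 1 \<le> i \<and> i \<le> snd (inp T1) a"
  using rhs_wf_leafD[OF rules_wfD[OF rules_wf_That]] by fastforce

lemma T2_rule_varD:
  "(q, a, \<rho>) \<in> rl T2 \<Longrightarrow> (q', i) \<in> set2_tr \<rho> \<Longrightarrow> q' \<in> st T2 \<and> 1 \<le> i \<and> i \<le> snd (inp T2) a"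
  using rhs_wf_leafD[OF rules_wfD[OF rules_wf_T2]] by fastforce

lemma run_That_imp_run_T1: "runH (q, S) s t \<Longrightarrow> wt (inp T1) s \<Longrightarrow> run1 q s t"
proof (induction s arbitrary: q S t)
  case (T a ss)
  from T.prems(1) obtain \<xi> \<zeta> where rule: "(q, a, \<xi>) \<in> rl T1" "S \<subseteq> st T2"
    "big_step (rl DA) (Lf (S, \<xi>)) \<zeta>"
    and run: "leafwise (var_runs (rl That) (map ground ss)) (conv \<zeta>) (emb t)"
    by (auto simp: big_step_Lf_Nd_iff That_rule_iff big_step_subst_rhs_iff)
  have shape: "strip_states \<zeta> = \<xi>" "\<forall>(S', lv)\<in>set2_tr \<zeta>. \<exists>v. lv = Lf v"
    using That_rule_shape[OF rule] by auto
  have "leafwise (\<lambda>(q', i) w. \<exists>S'. var_runs (rl That) (map ground ss) ((q', S'), i) w) \<xi> (emb t)"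
    using leafwise_conv_strip_states[OF shape(2) run] shape(1) by simp
  then have "leafwise (var_runs (rl T1) (map ground ss)) \<xi> (emb t)"
  proof (rule leafwise_emb_retype)
    fix x u assume x: "x \<in> set2_tr \<xi>"
      and run: "(\<lambda>(q', i) w. \<exists>S'. var_runs (rl That) (map ground ss) ((q', S'), i) w) x (emb u)"
    obtain q' i where x_eq: "x = (q', i)" by fastforce
    have "1 \<le> i \<and> i \<le> length ss"
      using rhs_wf_leafD[OF rules_wfD[OF rules_wf_T1 rule(1)]] x x_eq T.prems(2) by auto
    with run x_eq T.IH[OF nth_mem] T.prems(2)
    show "var_runs (rl T1) (map ground ss) x (emb u)" by fastforce
  qed
  with rule(1) show ?case by (auto simp: big_step_subst_rhs_iff intro: big_step_rule)
qed

lemma run_That_output_accepted: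
  "runH (q, S) s t \<Longrightarrow> wt (inp T1) s \<Longrightarrow> big_step (rl DA) (Lf (S, ground t)) (emb t)"
proof (induction s arbitrary: q S t)
  case (T a ss)
  from T.prems(1) obtain \<xi> \<zeta> where rule: "(q, a, \<xi>) \<in> rl T1" "big_step (rl DA) (Lf (S, \<xi>)) \<zeta>"
    and That_rule: "((q, S), a, conv \<zeta>) \<in> rl That"
    and run: "leafwise (var_runs (rl That) (map ground ss)) (conv \<zeta>) (emb t)"
    by (auto simp: big_step_Lf_Nd_iff That_rule_iff big_step_subst_rhs_iff)
  show ?case
  proof (rule dom_aut_accepts_graft[OF _ rule(2) run])
    show "ranked (snd (inp T2)) \<xi>" by (rule T1_rule_ranked[OF rule(1)])
    fix q' S' i u assume "((q', S'), i) \<in> set2_tr (conv \<zeta>)"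
      and "var_runs (rl That) (map ground ss) ((q', S'), i) (emb u)"
    moreover from That_rule_varD[OF That_rule this(1)] T.prems(2)
    have "i - 1 < length ss" by auto
    ultimately show "big_step (rl DA) (Lf (S', ground u)) (emb u)"
      using T.IH[OF nth_mem] T.prems(2) by auto
  qed
qed

lemma run_That_output_wt: "runH (q, S) s t \<Longrightarrow> wt (inp T1) s \<Longrightarrow> wt (inp T2) t"
  using big_step_emb_wt[OF run_That_imp_run_T1 rules_wf_T1] outp_T1 by metis

lemma run_That_defined_on: "runH (q, S) s t \<Longrightarrow> wt (inp T1) s \<Longrightarrow> defined_on T2 S t"
proof -
  assume run: "runH (q, S) s t" and wt: "wt (inp T1) s"
  then have "S \<subseteq> st T2"
    by (cases s) (auto simp: big_step_Lf_Nd_iff That_rule_iff)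
  moreover have "\<exists>r. run2 p t r" if "p \<in> S" for p
    using dom_aut_sound[OF rules_wf_T2 _ run_That_output_accepted[OF run wt] that]
      run_That_output_wt[OF run wt] by simp
  ultimately show ?thesis by (simp add: defined_on_def)
qed

definition lifted_leaf :: "'f tree list \<Rightarrow> ('q1 \<times> 'q2 set) \<times> nat \<Rightarrow> ('g, 'q1 \<times> ('f, unit) tr) tr \<Rightarrow> bool"
  where "lifted_leaf ss = (\<lambda>((q, S), i) w.
    \<exists>t. w = emb t \<and> var_runs (rl T1) (map ground ss) (q, i) w \<and> defined_on T2 S t)"

text \<open>The output trees of translated leaves have the type of the output trees of runs of M.\<close>

definition translated_leaf :: "'f tree list \<Rightarrow> 'q2 \<times> ('g, ('q1 \<times> 'q2 set) \<times> nat) tr \<Rightarrow>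
    ('h, (('q1 \<times> 'q2 set) \<times> 'q2) \<times> ('f \<times> ('q1 \<times> 'q2 set) set list, unit) tr) tr \<Rightarrow> bool"
  where "translated_leaf ss = (\<lambda>(p, lv) w. \<exists>q S i t r. lv = Lf ((q, S), i) \<and> p \<in> S \<and>
    defined_on T2 S t \<and> var_runs (rl T1) (map ground ss) (q, i) (emb t) \<and> run2 p t r \<and> w = emb r)"

text \<open>Lifting a run of T1 to a run of the product: the set of states of T2 attached to a subtree
  is guessed as the set of states in which T2 later processes it.\<close>

definition dom_aut_lift :: "'f tree list \<Rightarrow> 'q2 set \<Rightarrow> ('g, 'q1 \<times> nat) tr \<Rightarrow> 'g tree \<Rightarrow>
    ('g, 'q2 set \<times> ('g, 'q1 \<times> nat) tr) tr \<Rightarrow> bool" where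
  "dom_aut_lift ss S \<xi> t \<zeta> \<longleftrightarrow> big_step (rl DA) (Lf (S, \<xi>)) \<zeta> \<and>
    leafwise (lifted_leaf ss) (conv \<zeta>) (emb t) \<and>
    (\<forall>p r. p \<in> S \<longrightarrow> run2 p t r \<longrightarrow>
      (\<exists>\<zeta>'. big_step (rl T2) (Lf (p, conv \<zeta>)) \<zeta>' \<and> leafwise (translated_leaf ss) \<zeta>' (emb r)))"

lemma dom_aut_lift_Lf:
  assumes "var_runs (rl T1) (map ground ss) (q, i) (emb t)" "defined_on T2 S t"
  shows "dom_aut_lift ss S (Lf (q, i)) t (Lf (S, Lf (q, i)))"
  unfolding dom_aut_lift_def
proof (intro conjI allI impI)
  show "big_step (rl DA) (Lf (S, Lf (q, i))) (Lf (S, Lf (q, i)))" by (rule big_step_stuck)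
  show "leafwise (lifted_leaf ss) (conv (Lf (S, Lf (q, i)))) (emb t)"
    using assms by (auto simp: lifted_leaf_def leafwise_Lf_iff)
  fix p r assume "p \<in> S" "run2 p t r"
  then have "translated_leaf ss (p, Lf ((q, S), i)) (emb r)"
    unfolding translated_leaf_def using assms by fastforce
  moreover have "big_step (rl T2) (Lf (p, conv (Lf (S, Lf (q, i))))) (Lf (p, Lf ((q, S), i)))"
    by (simp add: big_step_stuck)
  ultimately show "\<exists>\<zeta>'. big_step (rl T2) (Lf (p, conv (Lf (S, Lf (q, i))))) \<zeta>' \<and>
      leafwise (translated_leaf ss) \<zeta>' (emb r)"
    by (auto simp: leafwise_Lf_iff)
qed

lemma dom_aut_lift_Nd:
  assumes rule: "(S, g, aut_rhs g (length ts) Si) \<in> rl DA"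
    and len: "length \<xi>s = length ts" "length ts = snd (inp T2) g"
    and runs: "\<And>p r. p \<in> S \<Longrightarrow> run2 p (T g ts) r \<Longrightarrow> \<exists>\<rho>. (p, g, \<rho>) \<in> rl T2 \<and>
       big_step (rl T2) (subst_rhs \<rho> (map ground ts)) (emb r) \<and> (\<forall>(q', i)\<in>set2_tr \<rho>. q' \<in> Si i)"
    and children: "\<And>j. j < length ts \<Longrightarrow> dom_aut_lift ss (Si (Suc j)) (\<xi>s ! j) (ts ! j) (Z j)"
  shows "dom_aut_lift ss S (Nd g \<xi>s) (T g ts) (Nd g (map Z [0..<length ts]))"
  unfolding dom_aut_lift_def
proof (intro conjI allI impI)
  show "big_step (rl DA) (Lf (S, Nd g \<xi>s)) (Nd g (map Z [0..<length ts]))"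
    using rule children len by (auto simp: dom_aut_lift_def big_step_aut_rhs_iff intro!: big_step_rule)
  show "leafwise (lifted_leaf ss) (conv (Nd g (map Z [0..<length ts]))) (emb (T g ts))"
    using children by (auto simp: dom_aut_lift_def list_all2_conv_all_nth intro!: leafwise_Nd)
  fix p r assume "p \<in> S" "run2 p (T g ts) r"
  then obtain \<rho> where \<rho>: "(p, g, \<rho>) \<in> rl T2" "big_step (rl T2) (subst_rhs \<rho> (map ground ts)) (emb r)"
    "\<forall>(q', i)\<in>set2_tr \<rho>. q' \<in> Si i"
    using runs by blast
  show "\<exists>\<zeta>'. big_step (rl T2) (Lf (p, conv (Nd g (map Z [0..<length ts])))) \<zeta>' \<and>
      leafwise (translated_leaf ss) \<zeta>' (emb r)"
    unfolding conv_simps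
  proof (rule big_step_through_children[OF \<rho>(1,2)])
    fix q i u assume x: "(q, i) \<in> set2_tr \<rho>"
      and "big_step (rl T2) (Lf (q, map ground ts ! (i - 1))) (emb u)"
    moreover have "i - 1 < length ts" "Suc (i - 1) = i" "q \<in> Si i"
      using T2_rule_varD[OF \<rho>(1) x] \<rho>(3) x len(2) by auto
    ultimately show "\<exists>\<zeta>'. big_step (rl T2) (Lf (q, map conv (map Z [0..<length ts]) ! (i - 1))) \<zeta>' \<and>
        leafwise (translated_leaf ss) \<zeta>' (emb u)"
      using children by (fastforce simp: dom_aut_lift_def)
  qed
qed

lemma exists_dom_aut_lift:
  assumes "wt_tr (inp T2) \<xi>" "leafwise (var_runs (rl T1) (map ground ss)) \<xi> (emb t)" "defined_on T2 S t"
  shows "\<exists>\<zeta>. dom_aut_lift ss S \<xi> t \<zeta>"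
  using assms
proof (induction \<xi> arbitrary: S t)
  case (Lf x)
  obtain q i where "x = (q, i)" by fastforce
  with Lf.prems dom_aut_lift_Lf[of ss q i t S] show ?case by (auto simp: leafwise_Lf_iff)
next
  case (Nd g \<xi>s)
  from Nd.prems(1,2) obtain ts where t: "t = T g ts" and len: "length \<xi>s = length ts"
    "length ts = snd (inp T2) g" and g: "g \<in> fst (inp T2)"
    and children: "list_all2 (leafwise (var_runs (rl T1) (map ground ss))) \<xi>s (map emb ts)"
    by (cases t) (auto simp: leafwise_Nd_iff dest: list_all2_lengthD)
  obtain Si where rule: "(S, g, aut_rhs g (length ts) Si) \<in> rl DA"
    and defined: "\<And>j. j < length ts \<Longrightarrow> defined_on T2 (Si (Suc j)) (ts ! j)"
    and runs: "\<And>p r. p \<in> S \<Longrightarrow> run2 p t r \<Longrightarrow> \<exists>\<rho>. (p, g, \<rho>) \<in> rl T2 \<and>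
       big_step (rl T2) (subst_rhs \<rho> (map ground ts)) (emb r) \<and> (\<forall>(q', i)\<in>set2_tr \<rho>. q' \<in> Si i)"
    by (rule dom_aut_rule_for_defined[OF rules_wf_T2 g len(2) Nd.prems(3)[unfolded t]])
      (auto simp: t len(2))
  have "\<exists>\<zeta>. dom_aut_lift ss (Si (Suc j)) (\<xi>s ! j) (ts ! j) \<zeta>" if "j < length ts" for j
    using Nd.IH[OF nth_mem] Nd.prems(1) children defined that len
    by (auto simp: list_all2_conv_all_nth)
  then obtain Z where "\<And>j. j < length ts \<Longrightarrow> dom_aut_lift ss (Si (Suc j)) (\<xi>s ! j) (ts ! j) (Z j)"
    by metis
  from dom_aut_lift_Nd[OF rule len runs[unfolded t] this] show ?case by (auto simp: t)
qed

lemma run_T1_imp_run_That: "run1 q s t \<Longrightarrow> wt (inp T1) s \<Longrightarrow> defined_on T2 S t \<Longrightarrow> runH (q, S) s t"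
proof (induction s arbitrary: q S t)
  case (T a ss)
  from T.prems(1) obtain \<xi> where rule: "(q, a, \<xi>) \<in> rl T1"
    and run: "leafwise (var_runs (rl T1) (map ground ss)) \<xi> (emb t)"
    by (auto simp: big_step_Lf_Nd_iff big_step_subst_rhs_iff)
  obtain \<zeta> where \<zeta>: "big_step (rl DA) (Lf (S, \<xi>)) \<zeta>" "leafwise (lifted_leaf ss) (conv \<zeta>) (emb t)"
    using exists_dom_aut_lift[OF T1_rule_wt_tr[OF rule] run T.prems(3)] by (auto simp: dom_aut_lift_def)
  have That_rule: "((q, S), a, conv \<zeta>) \<in> rl That"
    using rule \<zeta>(1) T.prems(3) by (auto simp: That_rule_iff defined_on_def)
  from \<zeta>(2) have "leafwise (var_runs (rl That) (map ground ss)) (conv \<zeta>) (emb t)"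
  proof (rule leafwise_emb_retype)
    fix x u assume x: "x \<in> set2_tr (conv \<zeta>)" and lifted: "lifted_leaf ss x (emb u)"
    obtain q' S' i where x_eq: "x = ((q', S'), i)" by (metis prod.exhaust)
    have "i - 1 < length ss" using That_rule_varD[OF That_rule] x x_eq T.prems(2) by fastforce
    with lifted x_eq T.IH[OF nth_mem] T.prems(2)
    show "var_runs (rl That) (map ground ss) x (emb u)" by (auto simp: lifted_leaf_def emb_inject)
  qed
  with That_rule show ?case by (auto simp: big_step_subst_rhs_iff intro: big_step_rule)
qed

end


section \<open>The look-ahead transducer M\<close>

lemma relabel_TE:
  assumes "relabel B (T a ss) s'"
  obtains ls ss' where "s' = T (a, ls) ss'" "length ls = length ss" "length ss' = length ss"
    "\<And>i. i < length ss \<Longrightarrow> ss ! i \<in> tdom B (ls ! i) \<and> relabel B (ss ! i) (ss' ! i)"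
  using assms by (cases rule: relabel.cases) (simp add: that)

context tt_composition
begin

abbreviation M_la :: "(('q1 \<times> 'q2 set) \<times> 'q2, 'f, 'h, ('q1 \<times> 'q2 set) set) latt" where
  "M_la \<equiv> constr_M T1 T2"

abbreviation runM :: "('q1 \<times> 'q2 set) \<times> 'q2 \<Rightarrow> ('f \<times> ('q1 \<times> 'q2 set) set list) tree \<Rightarrow> 'h tree \<Rightarrow> bool"
  where "runM Q s r \<equiv> big_step (la_rules M_la) (Lf (Q, ground s)) (emb r)"

definition states_consistent :: "('h, 'q2 \<times> ('g, ('q1 \<times> 'q2 set) \<times> nat) tr) tr \<Rightarrow> bool" where
  "states_consistent \<zeta> \<longleftrightarrow> (\<forall>x\<in>set2_tr \<zeta>. \<exists>p q S i. x = (p, Lf ((q, S), i)) \<and> p \<in> S)"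

lemma M_rule_iff:
  "(((q, S), q'), (a, ls), \<gamma>) \<in> la_rules M_la \<longleftrightarrow>
   (\<exists>\<eta> \<zeta>. \<gamma> = conv \<zeta> \<and> ((q, S), a, \<eta>) \<in> rl That \<and> q' \<in> st T2 \<and> q' \<in> S \<and>
     big_step (rl T2) (Lf (q', \<eta>)) \<zeta> \<and> states_consistent \<zeta> \<and> length ls = snd (inp T1) a \<and>
     (\<forall>i<length ls. ls ! i \<subseteq> st That \<and> calls \<eta> (Suc i) \<subseteq> ls ! i))"
proof -
  have "(\<forall>((q'', S''), q''')\<in>fst ` set2_tr (conv \<zeta>). q''' \<in> S'') \<longleftrightarrow> states_consistent \<zeta>"
    if "translates T2 q' \<eta> \<zeta>" for q' \<eta> \<zeta>
    using that unfolding translates_def states_consistent_def set2_conv by force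
  then show ?thesis
    unfolding la_rules_def constr_M_def conv_def[symmetric] translates_iff[symmetric]
    by auto (blast, metis)
qed

definition la_label :: "'f tree \<Rightarrow> ('q1 \<times> 'q2 set) set" where
  "la_label s = {P \<in> st That. \<exists>t. runH P s t}"

fun la_relabeling :: "'f tree \<Rightarrow> ('f \<times> ('q1 \<times> 'q2 set) set list) tree" where
  "la_relabeling (T a ss) = T (a, map la_label ss) (map la_relabeling ss)"

lemma la_label_subset: "la_label s \<subseteq> st That"
  by (auto simp: la_label_def)

lemma in_tdom_la_label: "wt (inp T1) s \<Longrightarrow> s \<in> tdom (dom_aut That) (la_label s)"
  using dom_aut_complete[OF rules_wf_That, of s "la_label s"]
  by (auto simp: tdom_def trees_def derives_emb_iff defined_on_def la_label_def)

lemma relabel_la_relabeling: "wt (inp T1) s \<Longrightarrow> relabel (dom_aut That) s (la_relabeling s)"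
proof (induction s)
  case (T a ss)
  then have "\<forall>i<length ss. la_label (ss ! i) \<in> st (dom_aut That) \<and>
      ss ! i \<in> tdom (dom_aut That) (la_label (ss ! i)) \<and> relabel (dom_aut That) (ss ! i) (la_relabeling (ss ! i))"
    using la_label_subset by (auto simp: in_tdom_la_label)
  then show ?case by (auto intro: relabel.intros)
qed

lemma T2_translation_leaf_origin:
  assumes "((q, S), a, \<eta>) \<in> rl That" "big_step (rl T2) (Lf (q', \<eta>)) \<zeta>" "(p, Lf x) \<in> set2_tr \<zeta>"
  shows "x \<in> set2_tr \<eta>"
proof -
  have "inputs_ranked (snd (inp T2)) (Lf (q', \<eta>))"
    using rhs_wf_ranked[OF rules_wfD[OF rules_wf_That assms(1)]] by (simp add: inputs_ranked_Lf)
  from big_step_stuck_leaf_origin[OF assms(2) this rules_wf_vars_in_range[OF rules_wf_T2] assms(3)]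
  show ?thesis by auto
qed

lemma translated_leaf_states_consistent: "leafwise (translated_leaf ss) \<zeta> W \<Longrightarrow> states_consistent \<zeta>"
  unfolding states_consistent_def
  using leafwise_leafD by (fastforce simp: translated_leaf_def)

lemma calls_subset_la_label:
  assumes "((q, S), a, \<eta>) \<in> rl That" "wt (inp T1) (T a ss)" "leafwise (lifted_leaf ss) \<eta> (emb t)"
    "i < length ss"
  shows "calls \<eta> (Suc i) \<subseteq> la_label (ss ! i)"
proof
  fix P assume "P \<in> calls \<eta> (Suc i)"
  then have P: "(P, Suc i) \<in> set2_tr \<eta>" by (simp add: calls_def)
  obtain q'' S'' where P_eq: "P = (q'', S'')" by fastforce
  with leafwise_leafD[OF assms(3) P] assms(4) obtain t' where "run1 q'' (ss ! i) t'" "defined_on T2 S'' t'"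
    by (auto simp: lifted_leaf_def)
  then have "runH P (ss ! i) t'"
    using run_T1_imp_run_That assms(2,4) P_eq by simp
  with That_rule_varD[OF assms(1) P] show "P \<in> la_label (ss ! i)"
    by (auto simp: la_label_def)
qed

lemma composition_imp_run_M:
  "run1 q s t \<Longrightarrow> wt (inp T1) s \<Longrightarrow> defined_on T2 S t \<Longrightarrow> q' \<in> S \<Longrightarrow> run2 q' t r \<Longrightarrow>
   runM ((q, S), q') (la_relabeling s) r"
proof (induction s arbitrary: q S q' t r)
  case (T a ss)
  from T.prems(1) obtain \<xi> where rule: "(q, a, \<xi>) \<in> rl T1"
    and run: "leafwise (var_runs (rl T1) (map ground ss)) \<xi> (emb t)"
    by (auto simp: big_step_Lf_Nd_iff big_step_subst_rhs_iff)
  obtain \<zeta>1 \<zeta> where \<zeta>1: "big_step (rl DA) (Lf (S, \<xi>)) \<zeta>1" "leafwise (lifted_leaf ss) (conv \<zeta>1) (emb t)"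
    and \<zeta>: "big_step (rl T2) (Lf (q', conv \<zeta>1)) \<zeta>" "leafwise (translated_leaf ss) \<zeta> (emb r)"
    using exists_dom_aut_lift[OF T1_rule_wt_tr[OF rule] run T.prems(3)] T.prems(4,5)
    unfolding dom_aut_lift_def by blast
  have That_rule: "((q, S), a, conv \<zeta>1) \<in> rl That"
    using rule \<zeta>1(1) T.prems(3) by (auto simp: That_rule_iff defined_on_def)
  have "states_consistent \<zeta>" "\<And>i. i < length ss \<Longrightarrow> calls (conv \<zeta>1) (Suc i) \<subseteq> la_label (ss ! i)"
    using translated_leaf_states_consistent[OF \<zeta>(2)] calls_subset_la_label[OF That_rule T.prems(2) \<zeta>1(2)]
    by auto
  then have M_rule: "(((q, S), q'), (a, map la_label ss), conv \<zeta>) \<in> la_rules M_la"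
    unfolding M_rule_iff using That_rule \<zeta>(1) T.prems(2-4) la_label_subset
    by (auto simp: defined_on_def intro!: exI[of _ "conv \<zeta>1"] exI[of _ \<zeta>])
  have "leafwise (\<lambda>x. var_runs (la_rules M_la) (map ground (map la_relabeling ss)) (conv_leaf x)) \<zeta> (emb r)"
  proof (rule leafwise_mono[OF \<zeta>(2)])
    fix x w assume x: "x \<in> set2_tr \<zeta>" and "translated_leaf ss x w"
    then obtain p q'' S'' i t' r' where leaf: "x = (p, Lf ((q'', S''), i))" "p \<in> S''" "defined_on T2 S'' t'"
      "var_runs (rl T1) (map ground ss) (q'', i) (emb t')" "run2 p t' r'" "w = emb r'"
      by (auto simp: translated_leaf_def)
    have "i - 1 < length ss"
      using That_rule_varD[OF That_rule T2_translation_leaf_origin[OF That_rule \<zeta>(1)]] x leaf(1) T.prems(2)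
      by fastforce
    with leaf T.IH[OF nth_mem] T.prems(2)
    show "var_runs (la_rules M_la) (map ground (map la_relabeling ss)) (conv_leaf x) w" by auto
  qed
  with M_rule show ?case
    by (auto simp: leafwise_conv_iff big_step_subst_rhs_iff intro: big_step_rule)
qed

lemma tdom_imp_run_That:
  assumes "s \<in> tdom (dom_aut That) l" "P \<in> l"
  shows "\<exists>t. runH P s t"
proof -
  from assms(1) obtain t where "wt (inp T1) s" "big_step (rl (dom_aut That)) (Lf (l, ground s)) (emb t)"
    by (auto simp: tdom_def trees_def derives_emb_iff)
  from dom_aut_sound[OF rules_wf_That _ this(2) assms(2)] this(1) show ?thesis by simp
qed

definition functional_at :: "'q1 \<times> 'q2 set \<Rightarrow> 'q2 \<Rightarrow> 'f tree \<Rightarrow> bool" where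
  "functional_at P q' s \<longleftrightarrow>
    (\<forall>t1 t2 r1 r2. runH P s t1 \<longrightarrow> run2 q' t1 r1 \<longrightarrow> runH P s t2 \<longrightarrow> run2 q' t2 r2 \<longrightarrow> r1 = r2)"

end

text \<open>A rule of M, applied at an input node, together with the rule of the product and its
  translation by T2 from which it was built.\<close>

locale M_step = tt_composition T1 T2
  for T1 :: "('q1, 'f, 'g) tt" and T2 :: "('q2, 'g, 'h) tt" +
  fixes q :: 'q1 and S :: "'q2 set" and q' :: 'q2 and a :: 'f and ss :: "'f tree list"
    and \<eta> :: "('g, ('q1 \<times> 'q2 set) \<times> nat) tr" and \<zeta> :: "('h, 'q2 \<times> ('g, ('q1 \<times> 'q2 set) \<times> nat) tr) tr"
  assumes That_rule: "((q, S), a, \<eta>) \<in> rl That"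
    and translation: "big_step (rl T2) (Lf (q', \<eta>)) \<zeta>"
    and consistent: "states_consistent \<zeta>"
    and wt_input: "wt (inp T1) (T a ss)"
begin

definition runs_at_calls :: "(('q1 \<times> 'q2 set) \<times> nat \<Rightarrow> 'g tree) \<Rightarrow> bool" where
  "runs_at_calls tc \<longleftrightarrow> (\<forall>x\<in>set2_tr \<eta>. runH (fst x) (ss ! (snd x - 1)) (tc x))"

abbreviation runs_on_choice :: "(('q1 \<times> 'q2 set) \<times> nat \<Rightarrow> 'g tree) \<Rightarrow>
    'q2 \<times> ('g, ('q1 \<times> 'q2 set) \<times> nat) tr \<Rightarrow> ('h, 'q2 \<times> ('g, unit) tr) tr \<Rightarrow> bool" where
  "runs_on_choice tc \<equiv> \<lambda>(p, lv) w. \<exists>v. lv = Lf v \<and> big_step (rl T2) (Lf (p, ground (tc v))) w"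

lemma call_index:
  assumes "(P, i) \<in> set2_tr \<eta>"
  shows "i - 1 < length ss" "wt (inp T1) (ss ! (i - 1))"
proof -
  from That_rule_varD[OF That_rule assms] wt_input show "i - 1 < length ss" by auto
  with wt_input show "wt (inp T1) (ss ! (i - 1))" by simp
qed

lemma leaf_shape:
  assumes "y \<in> set2_tr \<zeta>"
  obtains p q'' S'' i where "y = (p, Lf ((q'', S''), i))" "((q'', S''), i) \<in> set2_tr \<eta>" "p \<in> S''"
proof -
  from assms consistent obtain p q'' S'' i where "y = (p, Lf ((q'', S''), i))" "p \<in> S''"
    unfolding states_consistent_def by blast
  moreover from this(1) have "((q'', S''), i) \<in> set2_tr \<eta>"
    using T2_translation_leaf_origin[OF That_rule translation] assms by blast
  ultimately show ?thesis using that by blast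
qed

lemma graft_composition:
  assumes "runs_at_calls tc" "leafwise (runs_on_choice tc) \<zeta> W"
  shows "runH (q, S) (T a ss) (graft tc \<eta>) \<and> big_step (rl T2) (Lf (q', ground (graft tc \<eta>))) W"
proof
  have "leafwise (var_runs (rl That) (map ground ss)) \<eta> (emb (graft tc \<eta>))"
  proof (rule leafwise_graft)
    fix x assume x: "x \<in> set2_tr \<eta>"
    obtain P i where x_eq: "x = (P, i)" by fastforce
    have "runH P (ss ! (i - 1)) (tc x)"
      using bspec[OF assms(1)[unfolded runs_at_calls_def] x] x_eq by simp
    with call_index(1)[OF x[unfolded x_eq]] x_eq
    show "var_runs (rl That) (map ground ss) x (emb (tc x))" by simp
  qed
  then show "runH (q, S) (T a ss) (graft tc \<eta>)"
    using That_rule by (auto simp: big_step_subst_rhs_iff intro: big_step_rule)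
  have "inputs_ranked (snd (inp T2)) (Lf (q', \<eta>))"
    using rhs_wf_ranked[OF rules_wfD[OF rules_wf_That That_rule]] by (simp add: inputs_ranked_Lf)
  from big_step_subst_inputs[OF translation this rules_wf_vars_in_range[OF rules_wf_T2] assms(2)]
  show "big_step (rl T2) (Lf (q', ground (graft tc \<eta>))) W"
    by (simp add: subst_tr_emb)
qed

lemma exists_T2_outputs:
  assumes "runs_at_calls tc" "y0 \<in> set2_tr \<zeta>" "runs_on_choice tc y0 (emb r0)"
  shows "\<exists>oc. leafwise (runs_on_choice tc) \<zeta> (emb (graft oc \<zeta>)) \<and> oc y0 = r0"
proof -
  have "\<exists>r. runs_on_choice tc y (emb r)" if y: "y \<in> set2_tr \<zeta>" for y
  proof -
    obtain p q'' S'' i where leaf: "y = (p, Lf ((q'', S''), i))" "((q'', S''), i) \<in> set2_tr \<eta>" "p \<in> S''"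
      using y by (rule leaf_shape)
    have "runH (q'', S'') (ss ! (i - 1)) (tc ((q'', S''), i))"
      using bspec[OF assms(1)[unfolded runs_at_calls_def] leaf(2)] by simp
    from run_That_defined_on[OF this] call_index[OF leaf(2)] leaf(3)
    obtain r where "run2 p (tc ((q'', S''), i)) r"
      unfolding defined_on_def by blast
    then show ?thesis using leaf(1) by auto
  qed
  then have "\<forall>y\<in>set2_tr \<zeta>. \<exists>r. runs_on_choice tc y (emb r)" by blast
  from bchoice[OF this] obtain oc where oc: "\<forall>y\<in>set2_tr \<zeta>. runs_on_choice tc y (emb (oc y))" ..
  have "runs_on_choice tc y (emb ((oc(y0 := r0)) y))" if "y \<in> set2_tr \<zeta>" for y
    using oc that assms(3) by (cases "y = y0") simp_all
  then have "leafwise (runs_on_choice tc) \<zeta> (emb (graft (oc(y0 := r0)) \<zeta>))"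
    by (rule leafwise_graft)
  then show ?thesis by (intro exI[of _ "oc(y0 := r0)"]) simp
qed

lemma functional_at_leaf:
  assumes "runs_at_calls tc0" "functional_at (q, S) q' (T a ss)"
    "(p, Lf ((q'', S''), i)) \<in> set2_tr \<zeta>"
  shows "functional_at (q'', S'') p (ss ! (i - 1))"
  unfolding functional_at_def
proof (intro allI impI)
  let ?v = "((q'', S''), i)"
  have compose: "\<exists>oc. runH (q, S) (T a ss) (graft (tc0(?v := t)) \<eta>) \<and>
      run2 q' (graft (tc0(?v := t)) \<eta>) (graft oc \<zeta>) \<and> oc (p, Lf ?v) = r"
    if "runH (q'', S'') (ss ! (i - 1)) t" "run2 p t r" for t r
  proof -
    have "runs_at_calls (tc0(?v := t))"
      using assms(1) that(1) by (auto simp: runs_at_calls_def)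
    moreover from exists_T2_outputs[OF this assms(3)] that(2)
    obtain oc where "leafwise (runs_on_choice (tc0(?v := t))) \<zeta> (emb (graft oc \<zeta>))" "oc (p, Lf ?v) = r"
      by auto
    ultimately show ?thesis using graft_composition by blast
  qed
  fix t1 t2 r1 r2
  assume "runH (q'', S'') (ss ! (i - 1)) t1" "run2 p t1 r1"
    "runH (q'', S'') (ss ! (i - 1)) t2" "run2 p t2 r2"
  then obtain oc1 oc2 where
    1: "runH (q, S) (T a ss) (graft (tc0(?v := t1)) \<eta>)" "run2 q' (graft (tc0(?v := t1)) \<eta>) (graft oc1 \<zeta>)"
      "oc1 (p, Lf ?v) = r1" and
    2: "runH (q, S) (T a ss) (graft (tc0(?v := t2)) \<eta>)" "run2 q' (graft (tc0(?v := t2)) \<eta>) (graft oc2 \<zeta>)"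
      "oc2 (p, Lf ?v) = r2"
    using compose by meson
  have "graft oc1 \<zeta> = graft oc2 \<zeta>"
    using assms(2) 1 2 unfolding functional_at_def by blast
  then have "oc1 (p, Lf ?v) = oc2 (p, Lf ?v)" by (rule graft_eq_leafD[OF _ assms(3)])
  with 1 2 show "r1 = r2" by simp
qed

lemma exists_runs_at_calls:
  assumes "\<forall>i<length ls. calls \<eta> (Suc i) \<subseteq> ls ! i" "length ls = length ss"
    "\<And>i. i < length ss \<Longrightarrow> ss ! i \<in> tdom (dom_aut That) (ls ! i)"
  shows "\<exists>tc. runs_at_calls tc"
proof -
  have "\<exists>t. runH (fst x) (ss ! (snd x - 1)) t" if x: "x \<in> set2_tr \<eta>" for x
  proof -
    obtain P i where x_eq: "x = (P, i)" by fastforce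
    with x have i: "i - 1 < length ss" "Suc (i - 1) = i"
      using call_index(1) That_rule_varD[OF That_rule] by fastforce+
    have "calls \<eta> (Suc (i - 1)) \<subseteq> ls ! (i - 1)" using assms(1,2) i(1) by simp
    moreover have "P \<in> calls \<eta> (Suc (i - 1))" using x x_eq i(2) by (simp add: calls_def)
    ultimately have "P \<in> ls ! (i - 1)" by blast
    with tdom_imp_run_That assms(3)[OF i(1)] have "\<exists>t. runH P (ss ! (i - 1)) t" by blast
    with x_eq show ?thesis by simp
  qed
  then have "\<forall>x\<in>set2_tr \<eta>. \<exists>t. runH (fst x) (ss ! (snd x - 1)) t" by blast
  from bchoice[OF this] show ?thesis unfolding runs_at_calls_def .
qed

lemma functional_leaf_output:
  assumes "runs_at_calls tc" "functional_at (q, S) q' (T a ss)" "(p, Lf ((q'', S''), i)) \<in> set2_tr \<zeta>"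
    "runH (q'', S'') (ss ! (i - 1)) t" "run2 p t u"
  shows "run2 p (tc ((q'', S''), i)) u"
proof -
  have leaf: "((q'', S''), i) \<in> set2_tr \<eta>" "p \<in> S''"
    by (rule leaf_shape[OF assms(3)], simp)+
  have chosen: "runH (q'', S'') (ss ! (i - 1)) (tc ((q'', S''), i))"
    using bspec[OF assms(1)[unfolded runs_at_calls_def] leaf(1)] by simp
  obtain u' where u': "run2 p (tc ((q'', S''), i)) u'"
    using run_That_defined_on[OF chosen call_index(2)[OF leaf(1)]] leaf(2)
    unfolding defined_on_def by blast
  have "u' = u"
    using functional_at_leaf[OF assms(1-3)] chosen u' assms(4,5) unfolding functional_at_def by blast
  with u' show ?thesis by simp
qed
end

context tt_composition
begin

text \<open>The look-ahead guarantees that every call of the product in the rule of M has an output,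
  and functionality makes all choices of these outputs agree with the outputs M computes.\<close>

lemma run_M_imp_composition:
  "wt (inp T1) s \<Longrightarrow> relabel (dom_aut That) s s' \<Longrightarrow> runM ((q, S), q') s' r \<Longrightarrow>
   functional_at (q, S) q' s \<Longrightarrow> \<exists>t. runH (q, S) s t \<and> run2 q' t r"
proof (induction s arbitrary: q S q' s' r)
  case (T a ss)
  obtain ls ss' where s': "s' = T (a, ls) ss'" "length ls = length ss" "length ss' = length ss"
    and children: "\<And>i. i < length ss \<Longrightarrow>
      ss ! i \<in> tdom (dom_aut That) (ls ! i) \<and> relabel (dom_aut That) (ss ! i) (ss' ! i)"
    using T.prems(2) by (rule relabel_TE) blast
  from T.prems(3) obtain \<eta> \<zeta> where M_rule: "((q, S), a, \<eta>) \<in> rl That" "big_step (rl T2) (Lf (q', \<eta>)) \<zeta>"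
      "states_consistent \<zeta>" "\<forall>i<length ls. calls \<eta> (Suc i) \<subseteq> ls ! i"
    and run: "leafwise (var_runs (la_rules M_la) (map ground ss')) (conv \<zeta>) (emb r)"
    by (auto simp: s'(1) big_step_Lf_Nd_iff M_rule_iff big_step_subst_rhs_iff)
  interpret M_step T1 T2 q S q' a ss \<eta> \<zeta>
    by unfold_locales (use M_rule T.prems(1) in auto)
  obtain tc0 where tc0: "runs_at_calls tc0"
    using exists_runs_at_calls[OF M_rule(4) s'(2)] children by blast
  have "leafwise (runs_on_choice tc0) \<zeta> (emb r)"
  proof (rule leafwise_emb_retype[OF run[unfolded leafwise_conv_iff]])
    fix y u assume y: "y \<in> set2_tr \<zeta>"
      and run_M: "var_runs (la_rules M_la) (map ground ss') (conv_leaf y) (emb u)"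
    obtain p q'' S'' i where leaf: "y = (p, Lf ((q'', S''), i))" "((q'', S''), i) \<in> set2_tr \<eta>" "p \<in> S''"
      using y by (rule leaf_shape)
    note i = call_index[OF leaf(2)]
    have functional: "functional_at (q'', S'') p (ss ! (i - 1))"
      using functional_at_leaf[OF tc0 T.prems(4)] y leaf(1) by simp
    obtain t where "runH (q'', S'') (ss ! (i - 1)) t" "run2 p t u"
      using T.IH[OF nth_mem[OF i(1)] i(2) _ _ functional] children[OF i(1)] run_M leaf(1) s'(3) i(1)
      by auto
    with functional_leaf_output[OF tc0 T.prems(4)] y leaf(1)
    show "runs_on_choice tc0 y (emb u)" by auto
  qed
  from graft_composition[OF tc0 this] show ?case by blast
qed

lemma rel_That_iff: "(s, t) \<in> rel That \<longleftrightarrow> wt (inp T1) s \<and> wt (inp T2) t \<and> runH (q0 T1, {q0 T2}) s t"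
  unfolding rel_def trees_def by (auto simp: derives_emb_iff)

lemma rel_T2_iff: "(t, r) \<in> rel T2 \<longleftrightarrow> wt (inp T2) t \<and> wt (outp T2) r \<and> run2 (q0 T2) t r"
  unfolding rel_def trees_def by (auto simp: derives_emb_iff)

lemma la_rel_M_iff: "(s, r) \<in> la_rel M_la \<longleftrightarrow> wt (inp T1) s \<and> wt (outp T2) r \<and>
    (\<exists>s'. relabel (dom_aut That) s s' \<and> runM ((q0 T1, {q0 T2}), q0 T2) s' r)"
  unfolding la_rel_def trees_def by (auto simp: derives_emb_iff constr_M_def)

lemma runs_imp_composition:
  assumes "wt (inp T1) s" "runH (q0 T1, {q0 T2}) s t" "run2 (q0 T2) t r"
  shows "(s, r) \<in> rel That O rel T2"
proof -
  have "wt (inp T2) t" using run_That_output_wt assms(1,2) by blast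
  moreover then have "wt (outp T2) r" using big_step_emb_wt[OF assms(3) rules_wf_T2] by simp
  ultimately show ?thesis using assms by (auto simp: rel_That_iff rel_T2_iff)
qed

lemma composition_subset_la_rel: "rel That O rel T2 \<subseteq> la_rel M_la"
proof safe
  fix s t r assume "(s, t) \<in> rel That" "(t, r) \<in> rel T2"
  then have s: "wt (inp T1) s" and r: "wt (outp T2) r"
    and runs: "runH (q0 T1, {q0 T2}) s t" "run2 (q0 T2) t r"
    by (auto simp: rel_That_iff rel_T2_iff)
  have "defined_on T2 {q0 T2} t"
    using runs(2) tdtt_T2 by (auto simp: defined_on_def tdtt_def)
  with run_That_imp_run_T1[OF runs(1) s] s runs(2)
  have "runM ((q0 T1, {q0 T2}), q0 T2) (la_relabeling s) r"
    by (auto intro: composition_imp_run_M)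
  with s r relabel_la_relabeling show "(s, r) \<in> la_rel M_la"
    by (auto simp: la_rel_M_iff)
qed

lemma la_rel_subset_composition:
  assumes "single_valued (rel That O rel T2)"
  shows "la_rel M_la \<subseteq> rel That O rel T2"
proof safe
  fix s r assume "(s, r) \<in> la_rel M_la"
  then obtain s' where s: "wt (inp T1) s" and "relabel (dom_aut That) s s'"
    "runM ((q0 T1, {q0 T2}), q0 T2) s' r"
    by (auto simp: la_rel_M_iff)
  moreover have "functional_at (q0 T1, {q0 T2}) (q0 T2) s"
    using assms runs_imp_composition[OF s] unfolding functional_at_def by (meson single_valuedD)
  ultimately obtain t where "runH (q0 T1, {q0 T2}) s t" "run2 (q0 T2) t r"
    using run_M_imp_composition by blast
  then show "(s, r) \<in> rel That O rel T2" by (rule runs_imp_composition[OF s])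
qed

end

theorem corollary1:
  fixes T1 :: "('q1, 'f, 'g) tt" and T2 :: "('q2, 'g, 'h) tt"
  assumes "tdtt T1" and "tdtt T2" and "outp T1 = inp T2"
  shows "single_valued (rel (That1 T1 T2) O rel T2) \<longleftrightarrow> single_valued (la_rel (constr_M T1 T2))"
proof -
  interpret tt_composition T1 T2
    using assms by unfold_locales
  show ?thesis
  proof
    assume "single_valued (rel That O rel T2)"
    moreover from this have "la_rel M_la = rel That O rel T2"
      using la_rel_subset_composition composition_subset_la_rel by blast
    ultimately show "single_valued (la_rel M_la)" by simp
  next
    assume "single_valued (la_rel M_la)"
    with composition_subset_la_rel show "single_valued (rel That O rel T2)"
      by (rule single_valued_subset)
  qed
qed

end
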